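(* Let $G$ be a finite group and consider a stem extension $\{e\}\to M(G)\xrightarrow{\iota}\tilde{G}\xrightarrow{\pi}G\to\{e\}$ with $\tilde G$ a Schur cover of $G$. Let $H$ be a proper subgroup of $G$ such that $M(H)\cong M(G)$ and $\iota(M(G))\subseteq[\pi^{-1}(H),\pi^{-1}(H)]$. Then the subgraph of $\Delta_D(G)$ induced by $H$ equals $\Delta_D(H)$.
   Context: $M(G)$ denotes the Schur multiplier of $G$. A stem extension of $G$ is a central extension $\{e\}\to N\xrightarrow{\iota}\hat{G}\xrightarrow{\pi}G\to\{e\}$ with $\iota(N)\subseteq Z(\hat{G})\cap[\hat{G},\hat{G}]$; a Schur cover is a stem extension of maximal order (its kernel is $M(G)$). The deep commuting graph $\Delta_D(G)$ is the simple graph with vertex set $G$ in which two distinct vertices are adjacent if and only if their preimages under the projection from a Schur cover commute in that Schur cover (independent of the choice of Schur cover and preimages). *)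

theory Defs
  imports "HOL-Algebra.Algebra"
begin

definition group_center :: "('a, 'm) monoid_scheme \<Rightarrow> 'a set" where
  "group_center G = {z \<in> carrier G. \<forall>g \<in> carrier G. z \<otimes>\<^bsub>G\<^esub> g = g \<otimes>\<^bsub>G\<^esub> z}"

text \<open>A central extension of G, given by a surjective homomorphism proj from Gh onto G
  whose kernel (the image of iota, iota being the inclusion) is central.\<close>
definition central_extension ::
  "('b, 'n) monoid_scheme \<Rightarrow> ('a, 'm) monoid_scheme \<Rightarrow> ('b \<Rightarrow> 'a) \<Rightarrow> bool" where
  "central_extension Gh G proj \<longleftrightarrow>
     group Gh \<and> group G \<and> proj \<in> hom Gh G \<and> proj ` carrier Gh = carrier G \<and>
     kernel Gh G proj \<subseteq> group_center Gh"

definition stem_extension ::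
  "('b, 'n) monoid_scheme \<Rightarrow> ('a, 'm) monoid_scheme \<Rightarrow> ('b \<Rightarrow> 'a) \<Rightarrow> bool" where
  "stem_extension Gh G proj \<longleftrightarrow>
     central_extension Gh G proj \<and>
     kernel Gh G proj \<subseteq> group_center Gh \<inter> derived Gh (carrier Gh)"

text \<open>Competing stem extensions
  are taken on the carrier type nat; every finite group is isomorphic to one on nat,
  so this is no loss of generality for finite G.\<close>
definition schur_cover ::
  "('b, 'n) monoid_scheme \<Rightarrow> ('a, 'm) monoid_scheme \<Rightarrow> ('b \<Rightarrow> 'a) \<Rightarrow> bool" where
  "schur_cover Gh G proj \<longleftrightarrow>
     stem_extension Gh G proj \<and> finite (carrier Gh) \<and>
     (\<forall>(K :: nat monoid) (rho :: nat \<Rightarrow> 'a). stem_extension K G rho \<longrightarrow> order K \<le> order Gh)"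

text \<open>Deep commuting graph of G computed from the Schur cover (Gh, proj):
  vertex set carrier G, edge set a set of ordered pairs (symmetric).\<close>
definition deep_commuting_graph ::
  "('b, 'n) monoid_scheme \<Rightarrow> ('b \<Rightarrow> 'a) \<Rightarrow> ('a, 'm) monoid_scheme \<Rightarrow> 'a set \<times> ('a \<times> 'a) set" where
  "deep_commuting_graph Gh proj G =
     (carrier G,
      {(x, y). x \<in> carrier G \<and> y \<in> carrier G \<and> x \<noteq> y \<and>
         (\<forall>a \<in> carrier Gh. \<forall>b \<in> carrier Gh. proj a = x \<longrightarrow> proj b = y \<longrightarrow>
              a \<otimes>\<^bsub>Gh\<^esub> b = b \<otimes>\<^bsub>Gh\<^esub> a)})"

definition induced_subgraph :: "'a set \<times> ('a \<times> 'a) set \<Rightarrow> 'a set \<Rightarrow> 'a set \<times> ('a \<times> 'a) set" where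
  "induced_subgraph Gr S = (fst Gr \<inter> S, snd Gr \<inter> (S \<times> S))"

end

theory Submission
  imports Defs
begin

text \<open>Whether two lifts commute transfers from a Schur cover of a group to any finite central
  extension of it.  The fibre-product argument for this rests on the fact that a finite central
  extension \<open>P\<close> with kernel \<open>N\<close> yields a stem extension of order \<open>|P/N| \<cdot> |P' \<inter> N|\<close>, which is
  built by embedding \<open>N\<close> into a divisible group.  Under the hypotheses of the theorem, the
  preimage of \<open>H\<close> in the Schur cover of \<open>G\<close> is a stem extension of \<open>H\<close> of order
  \<open>|H| \<cdot> |M(G)| = |H| \<cdot> |M(H)|\<close>, hence a Schur cover of \<open>H\<close>, and the subgraph induced by \<open>H\<close>
  is its deep commuting graph.\<close>

section \<open>The circle group\<close>

text \<open>The power \<open>(\<real>/\<int>)\<^sup>'i\<close> of the circle, each coordinate represented by its fractional part.\<close>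
definition circle_group :: "('i \<Rightarrow> real) monoid" where
  "circle_group = \<lparr>carrier = {g. \<forall>i. 0 \<le> g i \<and> g i < 1},
     monoid.mult = (\<lambda>a b i. frac (a i + b i)), one = (\<lambda>i. 0)\<rparr>"

lemma carrier_circle_group: "carrier circle_group = {g. \<forall>i. 0 \<le> g i \<and> g i < 1}"
  and mult_circle_group: "a \<otimes>\<^bsub>circle_group\<^esub> b = (\<lambda>i. frac (a i + b i))"
  and one_circle_group: "\<one>\<^bsub>circle_group\<^esub> = (\<lambda>i. 0)"
  by (simp_all add: circle_group_def)

lemma frac_circle_group: "g \<in> carrier circle_group \<Longrightarrow> frac (g i) = g i"
  by (simp add: carrier_circle_group frac_eq)

lemma comm_group_circle_group: "comm_group circle_group"
proof (rule group.group_comm_groupI)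
  show "group circle_group"
  proof (rule groupI)
    fix x y z :: "'i \<Rightarrow> real"
    show "x \<otimes>\<^bsub>circle_group\<^esub> y \<in> carrier circle_group"
      by (simp add: mult_circle_group carrier_circle_group frac_lt_1)
    show "x \<otimes>\<^bsub>circle_group\<^esub> y \<otimes>\<^bsub>circle_group\<^esub> z
        = x \<otimes>\<^bsub>circle_group\<^esub> (y \<otimes>\<^bsub>circle_group\<^esub> z)"
      by (simp add: mult_circle_group add.assoc)
  next
    show "\<one>\<^bsub>circle_group\<^esub> \<in> carrier circle_group"
      by (simp add: one_circle_group carrier_circle_group)
  next
    fix x assume x: "x \<in> carrier circle_group"
    then show "\<one>\<^bsub>circle_group\<^esub> \<otimes>\<^bsub>circle_group\<^esub> x = x"
      by (simp add: mult_circle_group one_circle_group frac_circle_group)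
    have "(\<lambda>i. frac (- x i)) \<in> carrier circle_group"
      by (simp add: carrier_circle_group frac_lt_1)
    moreover have "(\<lambda>i. frac (- x i)) \<otimes>\<^bsub>circle_group\<^esub> x = \<one>\<^bsub>circle_group\<^esub>"
      by (simp add: mult_circle_group one_circle_group)
    ultimately show "\<exists>y\<in>carrier circle_group. y \<otimes>\<^bsub>circle_group\<^esub> x = \<one>\<^bsub>circle_group\<^esub>"
      by blast
  qed
qed (simp add: mult_circle_group add.commute)

lemma group_circle_group: "group circle_group"
  using comm_group_circle_group comm_group.axioms(2) by blast

lemma nat_pow_circle_group:
  "g \<in> carrier circle_group \<Longrightarrow> g [^]\<^bsub>circle_group\<^esub> (n::nat) = (\<lambda>i. frac (real n * g i))"
  by (induction n) (simp_all add: one_circle_group mult_circle_group algebra_simps)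

lemma int_pow_circle_group:
  assumes g: "g \<in> carrier circle_group"
  shows "g [^]\<^bsub>circle_group\<^esub> (k::int) = (\<lambda>i. frac (of_int k * g i))"
proof (cases "k \<ge> 0")
  case True
  then have "k = int (nat k)" by simp
  then show ?thesis using nat_pow_circle_group[OF g, of "nat k"]
    by (metis int_pow_int of_int_of_nat_eq)
next
  case False
  interpret C: group circle_group by (rule group_circle_group)
  define n where "n = nat (- k)"
  have k: "k = - int n" using False by (simp add: n_def)
  have "g [^]\<^bsub>circle_group\<^esub> k = inv\<^bsub>circle_group\<^esub> (g [^]\<^bsub>circle_group\<^esub> n)"
    using k by (simp add: C.int_pow_neg_int g)
  also have "\<dots> = (\<lambda>i. frac (- (real n * g i)))"
  proof (rule C.inv_equality)
    show "(\<lambda>i. frac (- (real n * g i))) \<otimes>\<^bsub>circle_group\<^esub> g [^]\<^bsub>circle_group\<^esub> n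
        = \<one>\<^bsub>circle_group\<^esub>"
      by (simp add: nat_pow_circle_group[OF g] mult_circle_group one_circle_group)
  qed (simp_all add: nat_pow_circle_group[OF g] carrier_circle_group frac_lt_1)
  finally show ?thesis using k by simp
qed

definition divisible :: "('a, 'm) monoid_scheme \<Rightarrow> bool" where
  "divisible Q \<longleftrightarrow> (\<forall>q \<in> carrier Q. \<forall>n::nat. n > 0 \<longrightarrow> (\<exists>r \<in> carrier Q. r [^]\<^bsub>Q\<^esub> n = q))"

lemma divisible_circle_group: "divisible circle_group"
  unfolding divisible_def
proof (intro ballI allI impI)
  fix q :: "'i \<Rightarrow> real" and n :: nat
  assume q: "q \<in> carrier circle_group" and n: "n > 0"
  let ?r = "\<lambda>i. q i / real n"
  have "q i < real n" for i
    using q n by (auto simp: carrier_circle_group intro: less_le_trans[of _ 1])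
  then have "?r \<in> carrier circle_group"
    using q n by (auto simp: carrier_circle_group divide_less_eq)
  moreover have "?r [^]\<^bsub>circle_group\<^esub> n = q"
    using n by (simp add: nat_pow_circle_group[OF \<open>?r \<in> carrier circle_group\<close>] frac_circle_group[OF q])
  ultimately show "\<exists>r\<in>carrier circle_group. r [^]\<^bsub>circle_group\<^esub> n = q" by blast
qed

section \<open>Extending homomorphisms into divisible abelian groups\<close>

text \<open>When \<open>B\<close> contains the derived subgroup it is normal, and then \<open>adjoin G B x\<close> is the
  subgroup generated by \<open>B\<close> and \<open>x\<close>.\<close>
definition adjoin :: "('a, 'm) monoid_scheme \<Rightarrow> 'a set \<Rightarrow> 'a \<Rightarrow> 'a set" where
  "adjoin G B x = {b \<otimes>\<^bsub>G\<^esub> x [^]\<^bsub>G\<^esub> (k::int) | b k. b \<in> B}"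

context group
begin

lemma inv_mult_cancel_left [simp]: "a \<in> carrier G \<Longrightarrow> c \<in> carrier G \<Longrightarrow> inv a \<otimes> (a \<otimes> c) = c"
  by (simp add: m_assoc[symmetric])

lemma commutator_in_derived:
  "a \<in> carrier G \<Longrightarrow> b \<in> carrier G \<Longrightarrow> a \<otimes> b \<otimes> inv a \<otimes> inv b \<in> derived G (carrier G)"
  unfolding derived_def by (intro generate.incl) blast

lemma conj_eq_mult_commutator:
  "b \<in> carrier G \<Longrightarrow> y \<in> carrier G \<Longrightarrow> y \<otimes> b \<otimes> inv y = b \<otimes> (inv b \<otimes> y \<otimes> b \<otimes> inv y)"
  by (simp add: m_assoc[symmetric])

lemma conj_mem_of_derived_subset:
  assumes B: "subgroup B G" "derived G (carrier G) \<subseteq> B" and b: "b \<in> B" and y: "y \<in> carrier G"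
  shows "y \<otimes> b \<otimes> inv y \<in> B"
proof -
  have bc: "b \<in> carrier G" using B b subgroup.subset by blast
  have "inv b \<otimes> y \<otimes> b \<otimes> inv y \<in> B"
    using B commutator_in_derived[of "inv b" y] bc y by auto
  then show ?thesis using conj_eq_mult_commutator[OF bc y] b B subgroup.m_closed by metis
qed

lemma hom_conj_eq_of_derived_kernel:
  assumes Q: "group Q"
    and B: "subgroup B G" "derived G (carrier G) \<subseteq> B"
    and \<phi>: "\<phi> \<in> hom (G\<lparr>carrier := B\<rparr>) Q" "\<forall>d \<in> derived G (carrier G). \<phi> d = \<one>\<^bsub>Q\<^esub>"
    and b: "b \<in> B" and y: "y \<in> carrier G"
  shows "\<phi> (y \<otimes> b \<otimes> inv y) = \<phi> b"
proof -
  have bc: "b \<in> carrier G" using B b subgroup.subset by blast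
  let ?c = "inv b \<otimes> y \<otimes> b \<otimes> inv y"
  have c: "?c \<in> derived G (carrier G)" using commutator_in_derived[of "inv b" y] bc y by simp
  have "\<phi> (y \<otimes> b \<otimes> inv y) = \<phi> b \<otimes>\<^bsub>Q\<^esub> \<phi> ?c"
    using conj_eq_mult_commutator[OF bc y] \<phi>(1) b c B(2) by (auto simp: hom_def)
  also have "\<dots> = \<phi> b" using \<phi> b c Q by (simp add: hom_def Pi_def group.is_monoid monoid.r_one)
  finally show ?thesis .
qed

lemma mult_int_pow_normal_form:
  "b \<in> carrier G \<Longrightarrow> b' \<in> carrier G \<Longrightarrow> x \<in> carrier G \<Longrightarrow>
    b \<otimes> x [^] (k::int) \<otimes> (b' \<otimes> x [^] (k'::int)) = (b \<otimes> (x [^] k \<otimes> b' \<otimes> inv (x [^] k))) \<otimes> x [^] (k + k')"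
  by (simp add: int_pow_mult m_assoc)

lemma
  assumes B: "subgroup B G" "derived G (carrier G) \<subseteq> B" and x: "x \<in> carrier G"
  shows subgroup_adjoin: "subgroup (adjoin G B x) G"
    and subset_adjoin: "B \<subseteq> adjoin G B x"
    and mem_adjoin: "x \<in> adjoin G B x"
proof -
  have sub: "B \<subseteq> carrier G" using B subgroup.subset by blast
  show "subgroup (adjoin G B x) G"
  proof (rule subgroupI)
    show "adjoin G B x \<subseteq> carrier G" using sub x by (auto simp: adjoin_def)
    show "adjoin G B x \<noteq> {}" unfolding adjoin_def using subgroup.one_closed[OF B(1)] by blast
  next
    fix z assume "z \<in> adjoin G B x"
    then obtain b k where bk: "b \<in> B" "z = b \<otimes> x [^] (k::int)" by (auto simp: adjoin_def)
    have bc: "b \<in> carrier G" using bk sub by blast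
    have "inv z = (x [^] (-k) \<otimes> inv b \<otimes> inv (x [^] (-k))) \<otimes> x [^] (-k)"
      using bk bc x by (simp add: inv_mult_group int_pow_neg m_assoc)
    moreover have "x [^] (-k) \<otimes> inv b \<otimes> inv (x [^] (-k)) \<in> B"
      using conj_mem_of_derived_subset[OF B subgroup.m_inv_closed[OF B(1) bk(1)]] x by simp
    ultimately show "inv z \<in> adjoin G B x" unfolding adjoin_def by blast
  next
    fix z w assume "z \<in> adjoin G B x" "w \<in> adjoin G B x"
    then obtain b k b' k' where bk: "b \<in> B" "z = b \<otimes> x [^] (k::int)" "b' \<in> B" "w = b' \<otimes> x [^] (k'::int)"
      by (auto simp: adjoin_def)
    have bc: "b \<in> carrier G" "b' \<in> carrier G" using bk sub by blast+
    have "z \<otimes> w = (b \<otimes> (x [^] k \<otimes> b' \<otimes> inv (x [^] k))) \<otimes> x [^] (k + k')"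
      using bk bc x by (simp add: mult_int_pow_normal_form)
    moreover have "b \<otimes> (x [^] k \<otimes> b' \<otimes> inv (x [^] k)) \<in> B"
      using subgroup.m_closed[OF B(1) bk(1) conj_mem_of_derived_subset[OF B bk(3)]] x by simp
    ultimately show "z \<otimes> w \<in> adjoin G B x" unfolding adjoin_def by blast
  qed
  have "b = b \<otimes> x [^] (0::int)" if "b \<in> B" for b using that sub by auto
  then show "B \<subseteq> adjoin G B x" unfolding adjoin_def by blast
  have "x = \<one> \<otimes> x [^] (1::int)" using x by simp
  then show "x \<in> adjoin G B x" unfolding adjoin_def using subgroup.one_closed[OF B(1)] by blast
qed

end

locale hom_adjoin = group G + Q: comm_group Q
  for G (structure) and Q :: "('q, 'r) monoid_scheme" +
  fixes B :: "'a set" and x :: 'a and \<phi> :: "'a \<Rightarrow> 'q" and q :: 'q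
  assumes B: "subgroup B G" "derived G (carrier G) \<subseteq> B"
    and \<phi>_hom: "\<phi> \<in> hom (G\<lparr>carrier := B\<rparr>) Q"
    and \<phi>_derived: "\<forall>d\<in>derived G (carrier G). \<phi> d = \<one>\<^bsub>Q\<^esub>"
    and x: "x \<in> carrier G" and q: "q \<in> carrier Q"
    and compatible: "\<And>k::int. x [^] k \<in> B \<Longrightarrow> \<phi> (x [^] k) = q [^]\<^bsub>Q\<^esub> k"
begin

sublocale \<phi>: group_hom "G\<lparr>carrier := B\<rparr>" Q \<phi>
  using subgroup_imp_group[OF B(1)] \<phi>_hom Q.group_axioms
  by (simp add: group_hom_def group_hom_axioms_def)

lemma B_carrier: "B \<subseteq> carrier G" using B subgroup.subset by blast

lemma \<phi>_carrier: "b \<in> B \<Longrightarrow> \<phi> b \<in> carrier Q"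
  and \<phi>_mult: "a \<in> B \<Longrightarrow> b \<in> B \<Longrightarrow> \<phi> (a \<otimes> b) = \<phi> a \<otimes>\<^bsub>Q\<^esub> \<phi> b"
  using \<phi>_hom by (auto simp: hom_def)

lemma \<phi>_inv: "b \<in> B \<Longrightarrow> \<phi> (inv b) = inv\<^bsub>Q\<^esub> (\<phi> b)"
  using \<phi>.hom_inv[of b] m_inv_consistent[OF B(1)] by simp

lemma well_defined:
  assumes b: "b \<in> B" "b' \<in> B" and eq: "b \<otimes> x [^] (k::int) = b' \<otimes> x [^] (k'::int)"
  shows "\<phi> b \<otimes>\<^bsub>Q\<^esub> q [^]\<^bsub>Q\<^esub> k = \<phi> b' \<otimes>\<^bsub>Q\<^esub> q [^]\<^bsub>Q\<^esub> k'"
proof -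
  have bc: "b \<in> carrier G" "b' \<in> carrier G" using b B_carrier by blast+
  have "inv b' \<otimes> b = inv b' \<otimes> (b \<otimes> x [^] k) \<otimes> inv (x [^] k)"
    using bc x by (simp add: m_assoc)
  also have "\<dots> = x [^] (k' - k)"
    using eq bc x by (simp add: m_assoc[symmetric] int_pow_diff)
  finally have e: "inv b' \<otimes> b = x [^] (k' - k)" .
  then have "x [^] (k' - k) \<in> B"
    using subgroup.m_closed[OF B(1) subgroup.m_inv_closed[OF B(1) b(2)] b(1)] by simp
  then have "inv\<^bsub>Q\<^esub> (\<phi> b') \<otimes>\<^bsub>Q\<^esub> \<phi> b = q [^]\<^bsub>Q\<^esub> k' \<otimes>\<^bsub>Q\<^esub> inv\<^bsub>Q\<^esub> (q [^]\<^bsub>Q\<^esub> k)"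
    using \<phi>_mult[OF subgroup.m_inv_closed[OF B(1) b(2)] b(1)] \<phi>_inv[OF b(2)] e compatible q
    by (simp add: Q.int_pow_diff)
  then have "\<phi> b = \<phi> b' \<otimes>\<^bsub>Q\<^esub> (q [^]\<^bsub>Q\<^esub> k' \<otimes>\<^bsub>Q\<^esub> inv\<^bsub>Q\<^esub> (q [^]\<^bsub>Q\<^esub> k))"
    using \<phi>_carrier b q by (metis Q.inv_closed Q.m_closed Q.inv_solve_left)
  then show ?thesis
    using \<phi>_carrier b q by (simp add: Q.m_assoc)
qed

definition extension :: "'a \<Rightarrow> 'q" where
  "extension z = (let p = (SOME p. fst p \<in> B \<and> z = fst p \<otimes> x [^] (snd p::int))
                   in \<phi> (fst p) \<otimes>\<^bsub>Q\<^esub> q [^]\<^bsub>Q\<^esub> snd p)"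

lemma extension_eq: "b \<in> B \<Longrightarrow> extension (b \<otimes> x [^] (k::int)) = \<phi> b \<otimes>\<^bsub>Q\<^esub> q [^]\<^bsub>Q\<^esub> k"
proof -
  assume b: "b \<in> B"
  let ?P = "\<lambda>p. fst p \<in> B \<and> b \<otimes> x [^] k = fst p \<otimes> x [^] (snd p::int)"
  define p where "p = (SOME p. ?P p)"
  have p: "?P p" unfolding p_def using b by (intro someI[of ?P "(b, k)"]) simp
  have "extension (b \<otimes> x [^] k) = \<phi> (fst p) \<otimes>\<^bsub>Q\<^esub> q [^]\<^bsub>Q\<^esub> snd p"
    unfolding extension_def p_def by (simp add: Let_def)
  also have "\<dots> = \<phi> b \<otimes>\<^bsub>Q\<^esub> q [^]\<^bsub>Q\<^esub> k"
    using well_defined[of "fst p" b "snd p" k] p b by simp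
  finally show ?thesis .
qed

lemma extension_hom: "extension \<in> hom (G\<lparr>carrier := adjoin G B x\<rparr>) Q"
proof (rule homI)
  fix z assume "z \<in> carrier (G\<lparr>carrier := adjoin G B x\<rparr>)"
  then obtain b k where bk: "b \<in> B" "z = b \<otimes> x [^] (k::int)" by (auto simp: adjoin_def)
  show "extension z \<in> carrier Q" using bk extension_eq \<phi>_carrier q by simp
next
  fix z w assume "z \<in> carrier (G\<lparr>carrier := adjoin G B x\<rparr>)" "w \<in> carrier (G\<lparr>carrier := adjoin G B x\<rparr>)"
  then obtain b k b' k' where bk: "b \<in> B" "z = b \<otimes> x [^] (k::int)" "b' \<in> B" "w = b' \<otimes> x [^] (k'::int)"
    by (auto simp: adjoin_def)
  let ?c = "x [^] k \<otimes> b' \<otimes> inv (x [^] k)"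
  have c: "?c \<in> B" "\<phi> ?c = \<phi> b'"
    using conj_mem_of_derived_subset[OF B bk(3)]
      hom_conj_eq_of_derived_kernel[OF Q.group_axioms B \<phi>_hom \<phi>_derived bk(3)] x by simp_all
  have "z \<otimes> w = (b \<otimes> ?c) \<otimes> x [^] (k + k')"
    using bk B_carrier x by (simp add: mult_int_pow_normal_form subsetD)
  then have "extension (z \<otimes> w) = \<phi> b \<otimes>\<^bsub>Q\<^esub> \<phi> b' \<otimes>\<^bsub>Q\<^esub> (q [^]\<^bsub>Q\<^esub> k \<otimes>\<^bsub>Q\<^esub> q [^]\<^bsub>Q\<^esub> k')"
    using extension_eq subgroup.m_closed[OF B(1) bk(1) c(1)] \<phi>_mult[OF bk(1) c(1)] c(2) q
    by (simp add: Q.int_pow_mult)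
  also have "\<dots> = extension z \<otimes>\<^bsub>Q\<^esub> extension w"
    using bk extension_eq \<phi>_carrier q by (simp add: Q.m_assoc Q.m_lcomm)
  finally show "extension (z \<otimes>\<^bsub>G\<lparr>carrier := adjoin G B x\<rparr>\<^esub> w) = extension z \<otimes>\<^bsub>Q\<^esub> extension w"
    by simp
qed

end

lemma (in group) hom_extend_adjoin:
  assumes "comm_group Q" and "subgroup B G" "derived G (carrier G) \<subseteq> B"
    and "\<phi> \<in> hom (G\<lparr>carrier := B\<rparr>) Q" "\<forall>d\<in>derived G (carrier G). \<phi> d = \<one>\<^bsub>Q\<^esub>"
    and "x \<in> carrier G" and "q \<in> carrier Q"
    and "\<And>k::int. x [^] k \<in> B \<Longrightarrow> \<phi> (x [^] k) = q [^]\<^bsub>Q\<^esub> k"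
  shows "\<exists>\<Phi>. \<Phi> \<in> hom (G\<lparr>carrier := adjoin G B x\<rparr>) Q \<and> (\<forall>b\<in>B. \<Phi> b = \<phi> b) \<and> \<Phi> x = q"
proof -
  interpret hom_adjoin G Q B x \<phi> q
    using assms by (intro hom_adjoin.intro hom_adjoin_axioms.intro is_group) auto
  have "extension b = \<phi> b" if "b \<in> B" for b
    using extension_eq[OF that, of 0] \<phi>_carrier[OF that] that B_carrier by auto
  moreover have "extension x = q"
    using extension_eq[OF subgroup.one_closed[OF B(1)], of 1] \<phi>.hom_one x q by simp
  ultimately show ?thesis using extension_hom by blast
qed

lemma (in group) dvd_of_int_pow_mem_subgroup:
  assumes B: "subgroup B G" and x: "x \<in> carrier G"
    and n: "0 < n" "x [^] n \<in> B" and least: "\<And>m::nat. 0 < m \<Longrightarrow> m < n \<Longrightarrow> x [^] m \<notin> B"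
    and k: "x [^] (k::int) \<in> B"
  shows "int n dvd k"
proof -
  define m where "m = k mod int n"
  have m: "0 \<le> m" "m < int n" using n(1) by (simp_all add: m_def)
  have "x [^] k = x [^] (int n * (k div int n)) \<otimes> x [^] m"
    using x by (simp add: m_def int_pow_mult[symmetric])
  also have "x [^] (int n * (k div int n)) = (x [^] n) [^] (k div int n)"
    using x by (simp add: int_pow_pow[symmetric] int_pow_int)
  finally have "x [^] m = inv ((x [^] n) [^] (k div int n)) \<otimes> x [^] k"
    using x by simp
  moreover have "(x [^] n) [^] (k div int n) \<in> B" using subgroup_int_pow_closed[OF B n(2)] .
  ultimately have "x [^] nat m \<in> B"
    using m(1) k subgroup.m_closed[OF B subgroup.m_inv_closed[OF B]] by (simp add: int_pow_int[symmetric])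
  then have "m = 0" using least[of "nat m"] m by linarith
  then show ?thesis by (simp add: m_def dvd_eq_mod_eq_0)
qed

lemma (in group) hom_extend_adjoin_divisible:
  assumes fin: "finite (carrier G)" and Q: "comm_group Q" "divisible Q"
    and B: "subgroup B G" "derived G (carrier G) \<subseteq> B"
    and \<phi>: "\<phi> \<in> hom (G\<lparr>carrier := B\<rparr>) Q" "\<forall>d\<in>derived G (carrier G). \<phi> d = \<one>\<^bsub>Q\<^esub>"
    and x: "x \<in> carrier G"
  shows "\<exists>\<Phi>. \<Phi> \<in> hom (G\<lparr>carrier := adjoin G B x\<rparr>) Q \<and> (\<forall>b\<in>B. \<Phi> b = \<phi> b)"
proof -
  interpret Q: comm_group Q by fact
  interpret \<phi>: group_hom "G\<lparr>carrier := B\<rparr>" Q \<phi>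
    using subgroup_imp_group[OF B(1)] \<phi>(1) Q.group_axioms
    by (simp add: group_hom_def group_hom_axioms_def)
  define n where "n = (LEAST n::nat. 0 < n \<and> x [^] n \<in> B)"
  have n: "0 < n" "x [^] n \<in> B"
    unfolding n_def
    by (rule LeastI2[of _ "ord x"], use ord_ge_1[OF fin x] subgroup.one_closed[OF B(1)] x in auto)+
  have least: "x [^] m \<notin> B" if "0 < m" "m < n" for m :: nat
    using not_less_Least[of m "\<lambda>n. 0 < n \<and> x [^] n \<in> B"] that unfolding n_def by blast
  have "\<phi> (x [^] n) \<in> carrier Q" using \<phi>(1) n by (auto simp: hom_def)
  then obtain r where r: "r \<in> carrier Q" "r [^]\<^bsub>Q\<^esub> n = \<phi> (x [^] n)"
    using Q(2) n unfolding divisible_def by blast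
  have "\<phi> (x [^] k) = r [^]\<^bsub>Q\<^esub> k" if k: "x [^] k \<in> B" for k :: int
  proof -
    obtain j where j: "k = int n * j"
      using dvd_of_int_pow_mem_subgroup[OF B(1) x n least k] by (auto simp: dvd_def)
    have "x [^] k = (x [^] n) [^]\<^bsub>G\<lparr>carrier := B\<rparr>\<^esub> j"
      using x n j int_pow_consistent[OF B(1)] by (simp add: int_pow_pow[symmetric] int_pow_int)
    then have "\<phi> (x [^] k) = (r [^]\<^bsub>Q\<^esub> n) [^]\<^bsub>Q\<^esub> j"
      using n r(2) \<phi>.hom_int_pow[of "x [^] n" j] by simp
    also have "\<dots> = r [^]\<^bsub>Q\<^esub> k"
      using r(1) j by (simp add: Q.int_pow_pow int_pow_int[symmetric])
    finally show ?thesis .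
  qed
  then show ?thesis using hom_extend_adjoin[OF Q(1) B \<phi> x r(1)] by blast
qed

lemma (in group) hom_extend_divisible:
  assumes fin: "finite (carrier G)" and Q: "comm_group Q" "divisible Q"
  shows "subgroup B G \<Longrightarrow> derived G (carrier G) \<subseteq> B \<Longrightarrow> \<phi> \<in> hom (G\<lparr>carrier := B\<rparr>) Q
    \<Longrightarrow> \<forall>d\<in>derived G (carrier G). \<phi> d = \<one>\<^bsub>Q\<^esub> \<Longrightarrow> \<exists>\<Phi>. \<Phi> \<in> hom G Q \<and> (\<forall>b\<in>B. \<Phi> b = \<phi> b)"
proof (induction "card (carrier G - B)" arbitrary: B \<phi> rule: less_induct)
  case less
  note B = less.prems(1,2) and \<phi> = less.prems(3,4)
  show ?case
  proof (cases "B = carrier G")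
    case True
    then show ?thesis using \<phi>(1) unfolding hom_def by auto
  next
    case False
    then obtain x where x: "x \<in> carrier G" "x \<notin> B" using subgroup.subset[OF B(1)] by blast
    obtain \<Phi>1 where \<Phi>1: "\<Phi>1 \<in> hom (G\<lparr>carrier := adjoin G B x\<rparr>) Q" "\<forall>b\<in>B. \<Phi>1 b = \<phi> b"
      using hom_extend_adjoin_divisible[OF fin Q B \<phi> x(1)] by blast
    have "card (carrier G - adjoin G B x) < card (carrier G - B)"
      using fin subset_adjoin[OF B x(1)] mem_adjoin[OF B x(1)] x
      by (intro psubset_card_mono) auto
    moreover have "derived G (carrier G) \<subseteq> adjoin G B x"
      using B subset_adjoin[OF B x(1)] by blast
    moreover have "\<forall>d\<in>derived G (carrier G). \<Phi>1 d = \<one>\<^bsub>Q\<^esub>" using B \<phi>(2) \<Phi>1(2) by auto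
    ultimately obtain \<Phi> where "\<Phi> \<in> hom G Q" "\<forall>b\<in>adjoin G B x. \<Phi> b = \<Phi>1 b"
      using less.hyps[OF _ subgroup_adjoin[OF B x(1)] _ \<Phi>1(1)] by blast
    then show ?thesis using \<Phi>1(2) subset_adjoin[OF B x(1)] by (metis subsetD)
  qed
qed

section \<open>Characters of finite abelian groups\<close>

lemma (in comm_group) character_nontrivial_at:
  assumes fin: "finite (carrier G)" and i: "i \<in> carrier G" "i \<noteq> \<one>"
  shows "\<exists>\<chi>. \<chi> \<in> hom G (circle_group :: (unit \<Rightarrow> real) monoid) \<and> \<chi> i \<noteq> \<one>\<^bsub>circle_group\<^esub>"
proof -
  let ?C = "circle_group :: (unit \<Rightarrow> real) monoid"
  interpret C: comm_group ?C by (rule comm_group_circle_group)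
  have ord: "ord i \<ge> 2" using ord_ge_1[OF fin i(1)] ord_eq_1[OF i(1)] i(2) by simp
  let ?q = "\<lambda>_. 1 / real (ord i)"
  have q: "?q \<in> carrier ?C" using ord by (simp add: carrier_circle_group)
  have derived: "derived G (carrier G) \<subseteq> {\<one>}" using derived_eq_singleton by simp
  have trivial: "(\<lambda>_. \<one>\<^bsub>?C\<^esub>) \<in> hom (G\<lparr>carrier := {\<one>}\<rparr>) ?C" by (simp add: hom_def)
  have compatible: "\<one>\<^bsub>?C\<^esub> = ?q [^]\<^bsub>?C\<^esub> k" if k: "i [^] k \<in> {\<one>}" for k :: int
  proof -
    obtain t where "k = int (ord i) * t" using k int_pow_eq_id[OF i(1)] by (auto simp: dvd_def)
    then have "real_of_int k * (1 / real (ord i)) = real_of_int t" using ord by simp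
    then show ?thesis by (simp add: int_pow_circle_group[OF q] one_circle_group)
  qed
  obtain \<Phi> where \<Phi>: "\<Phi> \<in> hom (G\<lparr>carrier := adjoin G {\<one>} i\<rparr>) ?C" "\<Phi> i = ?q"
    using hom_extend_adjoin[OF C.comm_group_axioms triv_subgroup derived trivial _ i(1) q] compatible
    by auto
  have \<Phi>_derived: "\<forall>d\<in>derived G (carrier G). \<Phi> d = \<one>\<^bsub>?C\<^esub>"
    using group_hom.hom_one[of "G\<lparr>carrier := adjoin G {\<one>} i\<rparr>" ?C \<Phi>] \<Phi>(1)
      subgroup_imp_group[OF subgroup_adjoin[OF triv_subgroup derived i(1)]] C.group_axioms derived
    by (auto simp: group_hom_def group_hom_axioms_def)
  obtain \<chi> where "\<chi> \<in> hom G ?C" "\<forall>b\<in>adjoin G {\<one>} i. \<chi> b = \<Phi> b"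
    using hom_extend_divisible[OF fin comm_group_circle_group divisible_circle_group
        subgroup_adjoin[OF triv_subgroup derived i(1)] _ \<Phi>(1) \<Phi>_derived]
      subset_adjoin[OF triv_subgroup derived i(1)] derived
    by blast
  moreover have "?q \<noteq> \<one>\<^bsub>?C\<^esub>" using ord by (auto simp: one_circle_group fun_eq_iff)
  ultimately show ?thesis using \<Phi>(2) mem_adjoin[OF triv_subgroup derived i(1)] by auto
qed

lemma (in comm_group) inj_hom_circle_group:
  assumes fin: "finite (carrier G)"
  obtains f where "f \<in> hom G (circle_group :: ('a \<Rightarrow> real) monoid)" "inj_on f (carrier G)"
proof -
  have "\<forall>i. \<exists>\<chi>. \<chi> \<in> hom G (circle_group :: (unit \<Rightarrow> real) monoid) \<and>
               (i \<in> carrier G \<and> i \<noteq> \<one> \<longrightarrow> \<chi> i \<noteq> \<one>\<^bsub>circle_group\<^esub>)"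
    using character_nontrivial_at[OF fin] trivial_hom[OF group_circle_group] by metis
  then obtain \<chi> where \<chi>: "\<And>i. \<chi> i \<in> hom G (circle_group :: (unit \<Rightarrow> real) monoid)"
    "\<And>i. i \<in> carrier G \<Longrightarrow> i \<noteq> \<one> \<Longrightarrow> \<chi> i i \<noteq> \<one>\<^bsub>circle_group\<^esub>"
    by metis
  define f :: "'a \<Rightarrow> 'a \<Rightarrow> real" where "f g = (\<lambda>i. \<chi> i g ())" for g
  have f: "f \<in> hom G circle_group"
  proof (rule homI)
    fix g assume "g \<in> carrier G"
    then show "f g \<in> carrier circle_group"
      using \<chi>(1) unfolding f_def hom_def by (auto simp: carrier_circle_group Pi_def)
  next
    fix g h assume "g \<in> carrier G" "h \<in> carrier G"
    then show "f (g \<otimes> h) = f g \<otimes>\<^bsub>circle_group\<^esub> f h"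
      using \<chi>(1) unfolding f_def hom_def by (simp add: mult_circle_group)
  qed
  interpret f: group_hom G circle_group f
    using f group_circle_group by (simp add: group_hom_def group_hom_axioms_def)
  have "kernel G circle_group f = {\<one>}"
  proof -
    have "g = \<one>" if "g \<in> carrier G" "f g = \<one>\<^bsub>circle_group\<^esub>" for g
      using that \<chi>(2)[of g] unfolding f_def by (auto simp: one_circle_group fun_eq_iff)
    then show ?thesis unfolding kernel_def by auto
  qed
  then have "inj_on f (carrier G)" by (rule f.trivial_ker_imp_inj)
  then show ?thesis using f that by blast
qed

section \<open>A stem extension built from a central extension\<close>

text \<open>For a finite central extension \<open>\<pi>\<close> of \<open>H0\<close> by \<open>N\<close> and an embedding \<open>f\<close> of \<open>N\<close> into the
  divisible group \<open>C\<close>, put \<open>L = P' \<inter> N\<close> and \<open>Q = C / f(L)\<close> with quotient map \<open>\<kappa>\<close>.  Extending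
  \<open>\<kappa> \<circ> f\<close> to some \<open>\<psi> : P \<rightarrow> Q\<close>, the pullback \<open>W\<close> of \<open>\<kappa>\<close> along \<open>\<psi>\<close> modulo the graph \<open>R\<close> of \<open>f\<close>
  is a stem extension of \<open>H0\<close> whose kernel has the order of \<open>L\<close>.\<close>
locale embedded_central_extension =
  fixes P :: "('p, 'm) monoid_scheme" (structure) and H0 :: "('h, 'n) monoid_scheme"
    and \<pi> :: "'p \<Rightarrow> 'h" and f :: "'p \<Rightarrow> 'i \<Rightarrow> real"
  assumes central: "central_extension P H0 \<pi>" and fin: "finite (carrier P)"
    and f_hom: "f \<in> hom (P\<lparr>carrier := kernel P H0 \<pi>\<rparr>) circle_group"
    and f_inj: "inj_on f (kernel P H0 \<pi>)"
begin

abbreviation C :: "('i \<Rightarrow> real) monoid" where "C \<equiv> circle_group"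
abbreviation N :: "'p set" where "N \<equiv> kernel P H0 \<pi>"
abbreviation L :: "'p set" where "L \<equiv> derived P (carrier P) \<inter> N"

sublocale group P using central by (simp add: central_extension_def)
sublocale \<pi>: group_hom P H0 \<pi>
  using central by (simp add: central_extension_def group_hom_def group_hom_axioms_def)
sublocale C: comm_group C by (rule comm_group_circle_group)

lemma group_H0: "group H0" and surj: "\<pi> ` carrier P = carrier H0"
  and N_central: "n \<in> N \<Longrightarrow> g \<in> carrier P \<Longrightarrow> n \<otimes> g = g \<otimes> n"
  using central by (auto simp: central_extension_def group_center_def)

lemma subgroup_N: "subgroup N P" by (rule \<pi>.subgroup_kernel)
lemma N_carrier: "N \<subseteq> carrier P" using subgroup_N subgroup.subset by blast
lemma subgroup_derived: "subgroup (derived P (carrier P)) P" by (rule derived_is_subgroup) simp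
lemma derived_carrier: "derived P (carrier P) \<subseteq> carrier P" by (rule derived_in_carrier) simp
lemma subgroup_L: "subgroup L P" by (intro subgroups_Inter_pair subgroup_derived subgroup_N)

lemma f_carrier: "n \<in> N \<Longrightarrow> f n \<in> carrier C"
  and f_mult: "n \<in> N \<Longrightarrow> m \<in> N \<Longrightarrow> f (n \<otimes> m) = f n \<otimes>\<^bsub>C\<^esub> f m"
  using f_hom by (auto simp: hom_def)

sublocale f: group_hom "P\<lparr>carrier := N\<rparr>" C f
  using f_hom subgroup_imp_group[OF subgroup_N] C.group_axioms
  by (simp add: group_hom_def group_hom_axioms_def)

lemma f_one: "f \<one> = \<one>\<^bsub>C\<^esub>" using f.hom_one by simp
lemma f_inv: "n \<in> N \<Longrightarrow> f (inv n) = inv\<^bsub>C\<^esub> (f n)"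
  using f.hom_inv[of n] m_inv_consistent[OF subgroup_N] by simp

definition F :: "('i \<Rightarrow> real) set" where "F = f ` L"
definition Q :: "('i \<Rightarrow> real) set monoid" where "Q = C Mod F"
definition \<kappa> :: "('i \<Rightarrow> real) \<Rightarrow> ('i \<Rightarrow> real) set" where "\<kappa> a = F #>\<^bsub>C\<^esub> a"

lemma subgroup_F: "subgroup F C"
  unfolding F_def using subgroup_incl[OF subgroup_L subgroup_N]
  by (intro f.subgroup_img_is_subgroup) auto

lemma card_F: "card F = card L"
  unfolding F_def using f_inj by (intro card_image) (auto intro: inj_on_subset)

lemma comm_group_Q: "comm_group Q"
  unfolding Q_def by (rule C.abelian_FactGroup[OF subgroup_F])

sublocale Q: comm_group Q by (rule comm_group_Q)

lemma \<kappa>_hom: "\<kappa> \<in> hom C Q"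
  unfolding \<kappa>_def Q_def using C.normal_iff_subgroup subgroup_F
  by (intro normal.r_coset_hom_Mod) blast

sublocale \<kappa>: group_hom C Q \<kappa>
  using \<kappa>_hom by (simp add: group_hom_def group_hom_axioms_def C.group_axioms Q.group_axioms)

lemma carrier_Q: "carrier Q = \<kappa> ` carrier C"
  unfolding Q_def \<kappa>_def FactGroup_def RCOSETS_def by auto

lemma divisible_Q: "divisible Q"
  unfolding divisible_def carrier_Q
proof (intro ballI allI impI)
  fix n :: nat and q assume "q \<in> \<kappa> ` carrier C" "n > 0"
  then obtain a r where "q = \<kappa> a" "r \<in> carrier C" "r [^]\<^bsub>C\<^esub> n = a"
    using divisible_circle_group unfolding divisible_def by blast
  then show "\<exists>r\<in>\<kappa> ` carrier C. r [^]\<^bsub>Q\<^esub> n = q" using \<kappa>.hom_nat_pow by force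
qed

lemma \<kappa>_eq_iff: "a \<in> carrier C \<Longrightarrow> b \<in> carrier C \<Longrightarrow> \<kappa> a = \<kappa> b \<longleftrightarrow> inv\<^bsub>C\<^esub> b \<otimes>\<^bsub>C\<^esub> a \<in> F"
  unfolding \<kappa>_def using C.m_comm
  by (metis C.inv_closed C.rcos_self C.repr_independence subgroup.rcos_module_rev subgroup.rcos_module_imp
      subgroup_F C.group_axioms C.repr_independenceD)

lemma subgroup_N_mult_derived: "subgroup (N <#> derived P (carrier P)) P"
  using second_isomorphism_grp.normal_set_mult_subgroup \<pi>.normal_kernel subgroup_derived
  by (metis second_isomorphism_grp.intro second_isomorphism_grp_axioms.intro)

lemma \<kappa>_f_eq:
  assumes "n \<in> N" "d \<in> derived P (carrier P)" "n' \<in> N" "d' \<in> derived P (carrier P)"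
    and "n \<otimes> d = n' \<otimes> d'"
  shows "\<kappa> (f n) = \<kappa> (f n')"
proof -
  have c: "n \<in> carrier P" "d \<in> carrier P" "n' \<in> carrier P" "d' \<in> carrier P"
    using assms N_carrier derived_carrier by auto
  have "inv n' \<otimes> n = d' \<otimes> inv d"
    using assms(5) c by (metis inv_solve_left' inv_solve_right m_assoc m_closed inv_closed)
  then have "inv n' \<otimes> n \<in> L"
    using subgroup.m_closed[OF subgroup_N subgroup.m_inv_closed[OF subgroup_N assms(3)] assms(1)]
      subgroup.m_closed[OF subgroup_derived assms(4) subgroup.m_inv_closed[OF subgroup_derived assms(2)]]
    by simp
  then have "inv\<^bsub>C\<^esub> (f n') \<otimes>\<^bsub>C\<^esub> f n \<in> F"
    unfolding F_def using f_mult f_inv assms(1,3) subgroup.m_inv_closed[OF subgroup_N] by force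
  then show ?thesis using \<kappa>_eq_iff f_carrier assms(1,3) by blast
qed

lemma mult_N_commute:
  assumes "n \<in> N" "d \<in> carrier P" "n' \<in> N" "d' \<in> carrier P"
  shows "(n \<otimes> d) \<otimes> (n' \<otimes> d') = (n \<otimes> n') \<otimes> (d \<otimes> d')"
proof -
  have c: "n \<in> carrier P" "n' \<in> carrier P" using assms N_carrier by auto
  have "(n \<otimes> d) \<otimes> (n' \<otimes> d') = n \<otimes> (d \<otimes> n') \<otimes> d'" using c assms by (simp add: m_assoc)
  also have "\<dots> = n \<otimes> (n' \<otimes> d) \<otimes> d'" using N_central[of n' d] assms by simp
  finally show ?thesis using c assms by (simp add: m_assoc)
qed

lemma mem_N_mult_derived: "n \<in> N \<Longrightarrow> d \<in> derived P (carrier P) \<Longrightarrow> n \<otimes> d \<in> N <#> derived P (carrier P)"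
  unfolding set_mult_def by blast

lemma exists_hom_N_mult_derived:
  "\<exists>\<phi>. \<phi> \<in> hom (P\<lparr>carrier := N <#> derived P (carrier P)\<rparr>) Q \<and>
     (\<forall>n\<in>N. \<forall>d\<in>derived P (carrier P). \<phi> (n \<otimes> d) = \<kappa> (f n))"
proof -
  let ?B = "N <#> derived P (carrier P)"
  define \<phi> where "\<phi> z = \<kappa> (f (fst (SOME p. fst p \<in> N \<and> snd p \<in> derived P (carrier P) \<and> z = fst p \<otimes> snd p)))"
    for z
  have \<phi>_eq: "\<phi> (n \<otimes> d) = \<kappa> (f n)" if "n \<in> N" "d \<in> derived P (carrier P)" for n d
  proof -
    let ?R = "\<lambda>p. fst p \<in> N \<and> snd p \<in> derived P (carrier P) \<and> n \<otimes> d = fst p \<otimes> snd p"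
    define p where "p = (SOME p. ?R p)"
    have p: "?R p" unfolding p_def using that by (intro someI[of ?R "(n, d)"]) simp
    have "\<phi> (n \<otimes> d) = \<kappa> (f (fst p))" unfolding \<phi>_def p_def by simp
    also have "\<dots> = \<kappa> (f n)" using \<kappa>_f_eq[OF that, of "fst p" "snd p"] p by simp
    finally show ?thesis .
  qed
  have "\<phi> \<in> hom (P\<lparr>carrier := ?B\<rparr>) Q"
  proof (rule homI)
    fix z assume "z \<in> carrier (P\<lparr>carrier := ?B\<rparr>)"
    then show "\<phi> z \<in> carrier Q"
      using \<phi>_eq f_carrier by (auto simp: set_mult_def carrier_Q)
  next
    fix z w assume "z \<in> carrier (P\<lparr>carrier := ?B\<rparr>)" "w \<in> carrier (P\<lparr>carrier := ?B\<rparr>)"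
    then obtain n d n' d' where nd: "n \<in> N" "d \<in> derived P (carrier P)" "z = n \<otimes> d"
      "n' \<in> N" "d' \<in> derived P (carrier P)" "w = n' \<otimes> d'"
      by (auto simp: set_mult_def)
    have "d \<in> carrier P" "d' \<in> carrier P" using nd derived_carrier by auto
    then have "z \<otimes> w = (n \<otimes> n') \<otimes> (d \<otimes> d')"
      using mult_N_commute[OF nd(1) _ nd(4)] nd(3,6) by simp
    then have "\<phi> (z \<otimes> w) = \<kappa> (f (n \<otimes> n'))"
      using \<phi>_eq subgroup.m_closed[OF subgroup_N nd(1,4)]
        subgroup.m_closed[OF subgroup_derived nd(2,5)] by simp
    also have "\<dots> = \<phi> z \<otimes>\<^bsub>Q\<^esub> \<phi> w"
      using nd \<phi>_eq f_mult f_carrier by simp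
    finally show "\<phi> (z \<otimes>\<^bsub>P\<lparr>carrier := ?B\<rparr>\<^esub> w) = \<phi> z \<otimes>\<^bsub>Q\<^esub> \<phi> w" by simp
  qed
  then show ?thesis using \<phi>_eq by blast
qed

lemma exists_hom_extending_\<kappa>_f: "\<exists>\<psi>. \<psi> \<in> hom P Q \<and> (\<forall>n\<in>N. \<psi> n = \<kappa> (f n))"
proof -
  let ?B = "N <#> derived P (carrier P)"
  obtain \<phi> where \<phi>: "\<phi> \<in> hom (P\<lparr>carrier := ?B\<rparr>) Q"
    and \<phi>_eq: "\<And>n d. n \<in> N \<Longrightarrow> d \<in> derived P (carrier P) \<Longrightarrow> \<phi> (n \<otimes> d) = \<kappa> (f n)"
    using exists_hom_N_mult_derived by blast
  have one: "\<one> \<in> N" "\<one> \<in> derived P (carrier P)"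
    using subgroup.one_closed[OF subgroup_N] subgroup.one_closed[OF subgroup_derived] by auto
  have "derived P (carrier P) \<subseteq> ?B"
  proof
    fix d assume d: "d \<in> derived P (carrier P)"
    then have "d = \<one> \<otimes> d" using derived_carrier by auto
    then show "d \<in> ?B" using mem_N_mult_derived[OF one(1) d] by simp
  qed
  moreover have "\<forall>d\<in>derived P (carrier P). \<phi> d = \<one>\<^bsub>Q\<^esub>"
  proof
    fix d assume d: "d \<in> derived P (carrier P)"
    then have "\<phi> d = \<phi> (\<one> \<otimes> d)" using derived_carrier by auto
    then show "\<phi> d = \<one>\<^bsub>Q\<^esub>" using \<phi>_eq[OF one(1) d] f_one by simp
  qed
  ultimately obtain \<psi> where \<psi>: "\<psi> \<in> hom P Q" "\<forall>b\<in>?B. \<psi> b = \<phi> b"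
    using hom_extend_divisible[OF fin comm_group_Q divisible_Q subgroup_N_mult_derived _ \<phi>] by blast
  have "\<psi> n = \<kappa> (f n)" if n: "n \<in> N" for n
  proof -
    have "\<psi> n = \<psi> (n \<otimes> \<one>)" using n N_carrier by auto
    then show ?thesis using \<psi>(2) mem_N_mult_derived[OF n one(2)] \<phi>_eq[OF n one(2)] by simp
  qed
  then show ?thesis using \<psi>(1) by blast
qed

end
lemma order_eq_order_mult_card_kernel:
  assumes "group E" "group H" "h \<in> hom E H" "h ` carrier E = carrier H"
  shows "order E = order H * card (kernel E H h)"
proof -
  interpret h: group_hom E H h using assms by (simp add: group_hom_def group_hom_axioms_def)
  have "card (carrier (E Mod kernel E H h)) = order H"
    using h.FactGroup_iso_set[OF assms(4)] bij_betw_same_card by (auto simp: iso_def order_def)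
  then show ?thesis
    using group.lagrange[OF assms(1) h.subgroup_kernel] by (simp add: FactGroup_def order_def)
qed

locale stem_construction = embedded_central_extension P H0 \<pi> f
  for P :: "('p, 'm) monoid_scheme" (structure) and H0 :: "('h, 'n) monoid_scheme"
    and \<pi> :: "'p \<Rightarrow> 'h" and f :: "'p \<Rightarrow> 'i \<Rightarrow> real" +
  fixes \<psi> :: "'p \<Rightarrow> ('i \<Rightarrow> real) set"
  assumes \<psi>_hom: "\<psi> \<in> hom P Q" and \<psi>_N: "n \<in> N \<Longrightarrow> \<psi> n = \<kappa> (f n)"
begin

sublocale \<psi>: group_hom P Q \<psi>
  using \<psi>_hom by (simp add: group_hom_def group_hom_axioms_def group_axioms Q.group_axioms)

definition W :: "('p \<times> ('i \<Rightarrow> real)) monoid" where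
  "W = (P \<times>\<times> C)\<lparr>carrier := {(p, d). p \<in> carrier P \<and> d \<in> carrier C \<and> \<kappa> d = \<psi> p}\<rparr>"

definition R :: "('p \<times> ('i \<Rightarrow> real)) set" where "R = (\<lambda>n. (n, f n)) ` N"

lemma mem_carrier_W: "(p, d) \<in> carrier W \<longleftrightarrow> p \<in> carrier P \<and> d \<in> carrier C \<and> \<kappa> d = \<psi> p"
  by (simp add: W_def)

lemma mult_W: "(p, d) \<otimes>\<^bsub>W\<^esub> (p', d') = (p \<otimes> p', d \<otimes>\<^bsub>C\<^esub> d')"
  and one_W: "\<one>\<^bsub>W\<^esub> = (\<one>, \<one>\<^bsub>C\<^esub>)"
  by (simp_all add: W_def)

lemma fst_carrier_W: "z \<in> carrier W \<Longrightarrow> fst z \<in> carrier P"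
  by (cases z) (simp add: mem_carrier_W)

lemma group_PC: "group (P \<times>\<times> C)" by (rule DirProd_group[OF group_axioms C.group_axioms])

lemma subgroup_carrier_W: "subgroup (carrier W) (P \<times>\<times> C)"
proof (rule group.subgroupI[OF group_PC])
  show "carrier W \<subseteq> carrier (P \<times>\<times> C)" by (auto simp: W_def)
  show "carrier W \<noteq> {}" using mem_carrier_W[of \<one> "\<one>\<^bsub>C\<^esub>"] by auto
next
  fix z assume "z \<in> carrier W"
  then show "inv\<^bsub>P \<times>\<times> C\<^esub> z \<in> carrier W"
    by (cases z) (simp add: mem_carrier_W inv_DirProd[OF group_axioms C.group_axioms])
next
  fix z w assume "z \<in> carrier W" "w \<in> carrier W"
  then show "z \<otimes>\<^bsub>P \<times>\<times> C\<^esub> w \<in> carrier W"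
    by (cases z, cases w) (simp add: mem_carrier_W)
qed

sublocale W: group W
  using group.subgroup_imp_group[OF group_PC subgroup_carrier_W] by (simp add: W_def)

lemma inv_W: "(p, d) \<in> carrier W \<Longrightarrow> inv\<^bsub>W\<^esub> (p, d) = (inv p, inv\<^bsub>C\<^esub> d)"
  using group.m_inv_consistent[OF group_PC subgroup_carrier_W]
    inv_DirProd[OF group_axioms C.group_axioms]
  by (simp add: W_def mem_carrier_W[unfolded W_def, simplified])

lemma exists_lift_W: "p \<in> carrier P \<Longrightarrow> \<exists>d. (p, d) \<in> carrier W"
  using \<psi>.hom_closed[of p] by (auto simp: carrier_Q mem_carrier_W)

lemma R_carrier: "R \<subseteq> carrier W"
  using N_carrier f_carrier \<psi>_N by (auto simp: R_def mem_carrier_W)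

lemma central_W:
  assumes "z \<in> carrier W" "fst z \<in> N" "w \<in> carrier W"
  shows "z \<otimes>\<^bsub>W\<^esub> w = w \<otimes>\<^bsub>W\<^esub> z"
  using assms N_central C.m_comm by (cases z, cases w) (auto simp: mem_carrier_W mult_W)

lemma subgroup_R: "subgroup R W"
proof (rule W.subgroupI)
  show "R \<subseteq> carrier W" by (rule R_carrier)
  show "R \<noteq> {}" using subgroup.one_closed[OF subgroup_N] by (auto simp: R_def)
next
  fix z assume "z \<in> R"
  then obtain n where n: "n \<in> N" "z = (n, f n)" unfolding R_def by blast
  then have "inv\<^bsub>W\<^esub> z = (inv n, f (inv n))" using R_carrier inv_W f_inv by (auto simp: R_def)
  then show "inv\<^bsub>W\<^esub> z \<in> R" unfolding R_def using subgroup.m_inv_closed[OF subgroup_N n(1)] by simp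
next
  fix z w assume "z \<in> R" "w \<in> R"
  then obtain n m where "n \<in> N" "z = (n, f n)" "m \<in> N" "w = (m, f m)" unfolding R_def by blast
  then show "z \<otimes>\<^bsub>W\<^esub> w \<in> R"
    unfolding R_def using subgroup.m_closed[OF subgroup_N] f_mult by (auto simp: mult_W)
qed

lemma normal_R: "R \<lhd> W"
proof (subst W.normal_inv_iff, intro conjI subgroup_R ballI)
  fix x h assume x: "x \<in> carrier W" and h: "h \<in> R"
  then have "h \<in> carrier W" "fst h \<in> N" using R_carrier by (auto simp: R_def)
  then have "x \<otimes>\<^bsub>W\<^esub> h \<otimes>\<^bsub>W\<^esub> inv\<^bsub>W\<^esub> x = h \<otimes>\<^bsub>W\<^esub> x \<otimes>\<^bsub>W\<^esub> inv\<^bsub>W\<^esub> x"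
    using central_W[of h x] x by simp
  also have "\<dots> = h" using x \<open>h \<in> carrier W\<close> by (simp add: W.m_assoc)
  finally have "x \<otimes>\<^bsub>W\<^esub> h \<otimes>\<^bsub>W\<^esub> inv\<^bsub>W\<^esub> x = h" .
  then show "x \<otimes>\<^bsub>W\<^esub> h \<otimes>\<^bsub>W\<^esub> inv\<^bsub>W\<^esub> x \<in> R" using h by simp
qed

lemma derived_lift_W:
  assumes "p \<in> derived P (carrier P)"
  shows "(p, \<one>\<^bsub>C\<^esub>) \<in> derived W (carrier W)"
proof -
  let ?T = "{p \<in> carrier P. (p, \<one>\<^bsub>C\<^esub>) \<in> derived W (carrier W)}"
  have D: "subgroup (derived W (carrier W)) W" by (rule W.derived_is_subgroup) simp
  have carrier: "(p, \<one>\<^bsub>C\<^esub>) \<in> carrier W" if "(p, \<one>\<^bsub>C\<^esub>) \<in> derived W (carrier W)" for p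
    using that W.derived_in_carrier[of "carrier W"] by auto
  have T: "subgroup ?T P"
  proof (rule subgroupI)
    show "?T \<noteq> {}" using subgroup.one_closed[OF D] by (auto simp: one_W)
  next
    fix a assume "a \<in> ?T"
    then show "inv a \<in> ?T" using subgroup.m_inv_closed[OF D, of "(a, \<one>\<^bsub>C\<^esub>)"] inv_W carrier by auto
  next
    fix a b assume "a \<in> ?T" "b \<in> ?T"
    then show "a \<otimes> b \<in> ?T"
      using subgroup.m_closed[OF D, of "(a, \<one>\<^bsub>C\<^esub>)" "(b, \<one>\<^bsub>C\<^esub>)"] by (auto simp: mult_W)
  qed blast
  have "c \<in> ?T" if c: "c \<in> derived_set P (carrier P)" for c
  proof -
    obtain a b where ab: "a \<in> carrier P" "b \<in> carrier P" "c = a \<otimes> b \<otimes> inv a \<otimes> inv b"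
      using c by blast
    obtain da db where d: "(a, da) \<in> carrier W" "(b, db) \<in> carrier W" using exists_lift_W ab by blast
    then have "da \<in> carrier C" "db \<in> carrier C" by (auto simp: mem_carrier_W)
    then have "da \<otimes>\<^bsub>C\<^esub> db \<otimes>\<^bsub>C\<^esub> inv\<^bsub>C\<^esub> da \<otimes>\<^bsub>C\<^esub> inv\<^bsub>C\<^esub> db = \<one>\<^bsub>C\<^esub>"
      by (metis C.m_comm C.inv_closed C.m_closed C.r_inv C.r_one C.m_assoc)
    then have "(a, da) \<otimes>\<^bsub>W\<^esub> (b, db) \<otimes>\<^bsub>W\<^esub> inv\<^bsub>W\<^esub> (a, da) \<otimes>\<^bsub>W\<^esub> inv\<^bsub>W\<^esub> (b, db) = (c, \<one>\<^bsub>C\<^esub>)"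
      using d ab by (simp add: inv_W mult_W)
    moreover have "(a, da) \<otimes>\<^bsub>W\<^esub> (b, db) \<otimes>\<^bsub>W\<^esub> inv\<^bsub>W\<^esub> (a, da) \<otimes>\<^bsub>W\<^esub> inv\<^bsub>W\<^esub> (b, db)
        \<in> derived W (carrier W)"
      by (rule W.commutator_in_derived[OF d])
    ultimately have "(c, \<one>\<^bsub>C\<^esub>) \<in> derived W (carrier W)" by simp
    then show ?thesis using ab by simp
  qed
  then have "generate P (derived_set P (carrier P)) \<subseteq> ?T"
    by (intro generate_subgroup_incl[OF _ T]) blast
  then show ?thesis using assms unfolding derived_def by blast
qed

lemma fst_hom: "(\<lambda>z. \<pi> (fst z)) \<in> hom W H0"
  by (rule homI) (auto simp: W_def)

lemma fst_surj: "(\<lambda>z. \<pi> (fst z)) ` carrier W = carrier H0"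
proof
  show "(\<lambda>z. \<pi> (fst z)) ` carrier W \<subseteq> carrier H0" using fst_hom by (rule hom_carrier)
  show "carrier H0 \<subseteq> (\<lambda>z. \<pi> (fst z)) ` carrier W"
  proof
    fix h assume "h \<in> carrier H0"
    then obtain p where p: "p \<in> carrier P" "h = \<pi> p" using surj by blast
    then obtain d where "(p, d) \<in> carrier W" using exists_lift_W by blast
    then show "h \<in> (\<lambda>z. \<pi> (fst z)) ` carrier W" using p(2) by force
  qed
qed

sublocale fst: group_hom W H0 "\<lambda>z. \<pi> (fst z)"
  using fst_hom group_H0 by (simp add: group_hom_def group_hom_axioms_def W.group_axioms)

lemma kernel_fst: "kernel W H0 (\<lambda>z. \<pi> (fst z)) = Sigma N (\<lambda>n. F #>\<^bsub>C\<^esub> f n)"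
proof -
  have iff: "(n, d) \<in> carrier W \<longleftrightarrow> d \<in> F #>\<^bsub>C\<^esub> f n" if "n \<in> N" for n d
  proof -
    have "(n, d) \<in> carrier W \<longleftrightarrow> d \<in> carrier C \<and> \<kappa> d = \<kappa> (f n)"
      using that N_carrier \<psi>_N by (auto simp: mem_carrier_W)
    also have "\<dots> \<longleftrightarrow> d \<in> F #>\<^bsub>C\<^esub> f n"
      using f_carrier[OF that] C.repr_independence[OF _ f_carrier[OF that] subgroup_F]
        C.rcos_self[OF _ subgroup_F] subgroup.elemrcos_carrier[OF subgroup_F C.group_axioms]
      unfolding \<kappa>_def by metis
    finally show ?thesis .
  qed
  have "kernel W H0 (\<lambda>z. \<pi> (fst z)) = {(n, d). n \<in> N \<and> (n, d) \<in> carrier W}"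
    by (auto simp: kernel_def W_def)
  then show ?thesis using iff by auto
qed

lemma R_kernel: "R \<subseteq> kernel W H0 (\<lambda>z. \<pi> (fst z))"
  using R_carrier by (auto simp: R_def kernel_def)

definition S :: "('p \<times> ('i \<Rightarrow> real)) set monoid" where "S = W Mod R"

definition \<sigma> :: "('p \<times> ('i \<Rightarrow> real)) set \<Rightarrow> 'h" where
  "\<sigma> = (SOME \<sigma>. \<sigma> \<in> hom S H0 \<and> (\<forall>z\<in>carrier W. \<sigma> (R #>\<^bsub>W\<^esub> z) = \<pi> (fst z)))"

sublocale S: group S unfolding S_def by (rule normal.factorgroup_is_group[OF normal_R])

lemma carrier_S: "carrier S = (\<lambda>z. R #>\<^bsub>W\<^esub> z) ` carrier W"
  unfolding S_def FactGroup_def RCOSETS_def by auto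

lemma mult_S:
  "z \<in> carrier W \<Longrightarrow> w \<in> carrier W \<Longrightarrow> (R #>\<^bsub>W\<^esub> z) \<otimes>\<^bsub>S\<^esub> (R #>\<^bsub>W\<^esub> w) = R #>\<^bsub>W\<^esub> (z \<otimes>\<^bsub>W\<^esub> w)"
  unfolding S_def using normal.rcos_sum[OF normal_R] by simp

lemma \<sigma>_hom: "\<sigma> \<in> hom S H0" and \<sigma>_coset: "z \<in> carrier W \<Longrightarrow> \<sigma> (R #>\<^bsub>W\<^esub> z) = \<pi> (fst z)"
proof -
  obtain \<sigma>' where "\<sigma>' \<in> hom S H0" "\<And>z. z \<in> carrier W \<Longrightarrow> \<sigma>' (R #>\<^bsub>W\<^esub> z) = \<pi> (fst z)"
    unfolding S_def by (rule fst.FactGroup_universal_kernel[OF normal_R R_kernel]) blast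
  then have "\<exists>\<sigma>. \<sigma> \<in> hom S H0 \<and> (\<forall>z\<in>carrier W. \<sigma> (R #>\<^bsub>W\<^esub> z) = \<pi> (fst z))" by blast
  then have "\<sigma> \<in> hom S H0 \<and> (\<forall>z\<in>carrier W. \<sigma> (R #>\<^bsub>W\<^esub> z) = \<pi> (fst z))"
    unfolding \<sigma>_def by (rule someI_ex)
  then show "\<sigma> \<in> hom S H0" "z \<in> carrier W \<Longrightarrow> \<sigma> (R #>\<^bsub>W\<^esub> z) = \<pi> (fst z)" by auto
qed

lemma \<sigma>_surj: "\<sigma> ` carrier S = carrier H0"
  unfolding carrier_S image_image using \<sigma>_coset fst_surj by simp

lemma kernel_\<sigma>: "kernel S H0 \<sigma> = (\<lambda>z. R #>\<^bsub>W\<^esub> z) ` kernel W H0 (\<lambda>z. \<pi> (fst z))"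
  using \<sigma>_coset by (auto simp: kernel_def carrier_S)

lemma kernel_\<sigma>_central: "kernel S H0 \<sigma> \<subseteq> group_center S"
proof
  fix Y assume "Y \<in> kernel S H0 \<sigma>"
  then obtain z where "z \<in> kernel W H0 (\<lambda>z. \<pi> (fst z))" "Y = R #>\<^bsub>W\<^esub> z"
    unfolding kernel_\<sigma> by blast
  then have z: "z \<in> carrier W" "fst z \<in> N" "Y = R #>\<^bsub>W\<^esub> z"
    using fst_carrier_W by (auto simp: kernel_def)
  have "Y \<otimes>\<^bsub>S\<^esub> Y' = Y' \<otimes>\<^bsub>S\<^esub> Y" if Y': "Y' \<in> carrier S" for Y'
  proof -
    obtain w where w: "w \<in> carrier W" "Y' = R #>\<^bsub>W\<^esub> w" using Y' carrier_S by auto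
    then show ?thesis
      using z mult_S[OF z(1) w(1)] mult_S[OF w(1) z(1)] central_W[OF z(1,2) w(1)] by simp
  qed
  moreover have "Y \<in> carrier S" using z carrier_S by blast
  ultimately show "Y \<in> group_center S" unfolding group_center_def by blast
qed

text \<open>Every kernel element is the coset of some \<open>(l, \<one>)\<close> with \<open>l \<in> L\<close>.\<close>
lemma kernel_\<sigma>_derived: "kernel S H0 \<sigma> \<subseteq> derived S (carrier S)"
proof
  fix Y assume "Y \<in> kernel S H0 \<sigma>"
  then obtain n d where n: "n \<in> N" and d: "d \<in> F #>\<^bsub>C\<^esub> f n" and Y: "Y = R #>\<^bsub>W\<^esub> (n, d)"
    by (auto simp: kernel_\<sigma> kernel_fst)
  have "d \<otimes>\<^bsub>C\<^esub> inv\<^bsub>C\<^esub> (f n) \<in> F"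
    using subgroup.rcos_module_imp[OF subgroup_F C.group_axioms f_carrier[OF n] d] .
  then obtain l where l: "l \<in> L" "f l = d \<otimes>\<^bsub>C\<^esub> inv\<^bsub>C\<^esub> (f n)" unfolding F_def by auto
  have dC: "d \<in> carrier C" using subgroup.elemrcos_carrier[OF subgroup_F C.group_axioms f_carrier[OF n] d] .
  have lc: "l \<in> carrier P" "n \<in> carrier P" using l n N_carrier by auto
  have "f (n \<otimes> l) = d"
    using f_mult[OF n] l f_carrier[OF n] dC by (simp add: C.m_lcomm)
  then have nl: "(n \<otimes> l, d) \<in> R"
    unfolding R_def using subgroup.m_closed[OF subgroup_N n] l by force
  have "\<psi> (inv l) = \<kappa> (f (inv l))" using \<psi>_N subgroup.m_inv_closed[OF subgroup_L l(1)] by simp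
  also have "\<dots> = \<kappa> \<one>\<^bsub>C\<^esub>"
    using subgroup.rcos_const[OF subgroup_F C.group_axioms] subgroup.m_inv_closed[OF subgroup_L l(1)]
      C.coset_mult_one[OF subgroup.subset[OF subgroup_F]]
    unfolding \<kappa>_def F_def by simp
  finally have "\<psi> (inv l) = \<kappa> \<one>\<^bsub>C\<^esub>" .
  then have il: "(inv l, \<one>\<^bsub>C\<^esub>) \<in> carrier W" using lc by (simp add: mem_carrier_W)
  have "(n, d) = (n \<otimes> l, d) \<otimes>\<^bsub>W\<^esub> (inv l, \<one>\<^bsub>C\<^esub>)"
    using lc dC by (simp add: mult_W m_assoc)
  then have "(n, d) \<in> R #>\<^bsub>W\<^esub> (inv l, \<one>\<^bsub>C\<^esub>)" unfolding r_coset_def using nl by blast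
  then have "Y = R #>\<^bsub>W\<^esub> (inv l, \<one>\<^bsub>C\<^esub>)"
    using W.repr_independence[OF _ il subgroup_R] Y by simp
  moreover have "(inv l, \<one>\<^bsub>C\<^esub>) \<in> derived W (carrier W)"
    using derived_lift_W subgroup.m_inv_closed[OF subgroup_derived] l(1) by blast
  moreover interpret q: group_hom W S "\<lambda>z. R #>\<^bsub>W\<^esub> z"
    using normal.r_coset_hom_Mod[OF normal_R]
    by (simp add: S_def group_hom_def group_hom_axioms_def W.group_axioms S.group_axioms[unfolded S_def])
  have "derived S (carrier S) = (\<lambda>z. R #>\<^bsub>W\<^esub> z) ` derived W (carrier W)"
    using q.derived_img[of "carrier W"] carrier_S by simp
  ultimately show "Y \<in> derived S (carrier S)" by blast
qed

lemma stem_extension_S: "stem_extension S H0 \<sigma>"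
  unfolding stem_extension_def central_extension_def
  using S.group_axioms group_H0 \<sigma>_hom \<sigma>_surj kernel_\<sigma>_central kernel_\<sigma>_derived by blast

lemma card_kernel_fst: "card (kernel W H0 (\<lambda>z. \<pi> (fst z))) = card N * card F"
proof -
  have fin_N: "finite N" using finite_subset[OF N_carrier fin] .
  have F: "finite F" unfolding F_def using fin_N by simp
  have "card (F #>\<^bsub>C\<^esub> f n) = card F" if "n \<in> N" for n
    using C.card_rcosets_equal[OF _ subgroup.subset[OF subgroup_F]] f_carrier[OF that]
    by (metis C.rcosetsI subgroup.subset[OF subgroup_F])
  moreover have "finite (F #>\<^bsub>C\<^esub> f n)" if "n \<in> N" for n
    using C.rcosets_finite[OF _ subgroup.subset[OF subgroup_F] F] f_carrier[OF that]
    by (metis C.rcosetsI subgroup.subset[OF subgroup_F])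
  ultimately show ?thesis
    unfolding kernel_fst using fin_N by (simp add: card_SigmaI)
qed

lemma order_S: "order S = order H0 * card L"
proof -
  have "card (rcosets\<^bsub>W\<^esub> R) * card N = order W"
    using W.lagrange[OF subgroup_R] card_image[of "\<lambda>n. (n, f n)" N]
    by (simp add: R_def inj_on_def)
  also have "order W = order H0 * card F * card N"
    using order_eq_order_mult_card_kernel[OF W.group_axioms group_H0 fst_hom fst_surj]
    by (simp add: card_kernel_fst)
  finally have "card (rcosets\<^bsub>W\<^esub> R) = order H0 * card F"
    using finite_subset[OF N_carrier fin] subgroup.one_closed[OF subgroup_N] by auto
  then show ?thesis by (simp add: S_def order_def FactGroup_def card_F)
qed

lemma finite_carrier_S: "finite (carrier S)"
proof -
  have "finite (carrier H0)" using surj fin by (metis finite_imageI)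
  then have "order H0 > 0" unfolding order_def using group.is_monoid[OF group_H0] card_gt_0_iff
    by (blast intro: monoid.one_closed)
  moreover have "card L > 0"
    using finite_subset[OF _ fin, of L] N_carrier subgroup.one_closed[OF subgroup_L] card_gt_0_iff
    by blast
  ultimately show ?thesis using order_S unfolding order_def by (simp add: card_ge_0_finite)
qed

end

lemma stem_extension_iso:
  assumes stem: "stem_extension S H0 \<sigma>" and K: "group K" and \<phi>: "\<phi> \<in> iso K S"
  shows "stem_extension K H0 (\<lambda>k. \<sigma> (\<phi> k))"
proof -
  have S: "group S" and \<sigma>: "\<sigma> \<in> hom S H0" "\<sigma> ` carrier S = carrier H0"
    and kernel: "kernel S H0 \<sigma> \<subseteq> group_center S \<inter> derived S (carrier S)"
    using stem by (auto simp: stem_extension_def central_extension_def)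
  interpret \<phi>: group_hom K S \<phi>
    using K S \<phi> by (simp add: group_hom_def group_hom_axioms_def iso_iff)
  have \<phi>_bij: "\<phi> ` carrier K = carrier S" "inj_on \<phi> (carrier K)" using \<phi> by (auto simp: iso_iff)
  have derived: "derived S (carrier S) = \<phi> ` derived K (carrier K)"
    using \<phi>.derived_img[of "carrier K"] \<phi>_bij by simp
  have "k \<in> group_center K \<inter> derived K (carrier K)" if k: "k \<in> kernel K H0 (\<lambda>k. \<sigma> (\<phi> k))" for k
  proof -
    have kK: "k \<in> carrier K" and "\<phi> k \<in> kernel S H0 \<sigma>" using k by (auto simp: kernel_def)
    then have center: "\<phi> k \<in> group_center S" and "\<phi> k \<in> derived S (carrier S)" using kernel by auto
    then obtain d where d: "d \<in> derived K (carrier K)" "\<phi> k = \<phi> d" using derived by auto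
    then have "k = d"
      using \<phi>_bij(2) kK K group.derived_in_carrier[OF K, of "carrier K"] by (auto dest: inj_onD)
    moreover have "k \<otimes>\<^bsub>K\<^esub> g = g \<otimes>\<^bsub>K\<^esub> k" if "g \<in> carrier K" for g
      using center that kK \<phi>_bij(2) by (intro inj_onD[OF \<phi>_bij(2)]) (auto simp: group_center_def)
    ultimately show ?thesis using kK d(1) by (auto simp: group_center_def)
  qed
  moreover have "(\<lambda>k. \<sigma> (\<phi> k)) \<in> hom K H0" using hom_compose[OF \<phi>.homh \<sigma>(1)] by (simp add: comp_def)
  ultimately show ?thesis
    using K stem \<sigma>(2) \<phi>_bij(1)
    by (auto simp: stem_extension_def central_extension_def image_image[symmetric])
qed

text \<open>The maximality condition in \<open>schur_cover\<close> only ranges over groups on \<open>nat\<close>.\<close>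
lemma exists_nat_stem_extension:
  fixes S :: "('a set, 'b) monoid_scheme"
  assumes stem: "stem_extension S H0 \<sigma>" and fin: "finite (carrier S)"
  shows "\<exists>(K :: nat monoid) \<rho>. stem_extension K H0 \<rho> \<and> order K = order S"
proof -
  have S: "group S" using stem by (simp add: stem_extension_def central_extension_def)
  obtain rep :: "'a set \<Rightarrow> nat" where rep: "inj_on rep (carrier S)"
    using finite_imp_inj_to_nat_seg[OF fin] by blast
  have K: "group (flatten S rep)" by (rule flatten_set_group[OF S rep])
  have "rep \<in> iso S (flatten S rep)"
    using flatten_set_group_hom[OF S rep] rep by (simp add: iso_iff flatten_def)
  then have "inv_into (carrier S) rep \<in> iso (flatten S rep) S" by (rule group.iso_set_sym[OF S])
  then have "stem_extension (flatten S rep) H0 (\<lambda>k. \<sigma> (inv_into (carrier S) rep k))"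
    by (rule stem_extension_iso[OF stem K])
  moreover have "order (flatten S rep) = order S"
    using rep by (simp add: order_def flatten_def card_image)
  ultimately show ?thesis by blast
qed

theorem exists_stem_extension_of_central_extension:
  assumes central: "central_extension P H0 \<pi>" and fin: "finite (carrier P)"
  shows "\<exists>(K :: nat monoid) \<rho>. stem_extension K H0 \<rho> \<and>
           order K = order H0 * card (derived P (carrier P) \<inter> kernel P H0 \<pi>)"
proof -
  interpret P: group P using central by (simp add: central_extension_def)
  interpret \<pi>: group_hom P H0 \<pi>
    using central by (simp add: central_extension_def group_hom_def group_hom_axioms_def)
  have "comm_group (P\<lparr>carrier := kernel P H0 \<pi>\<rparr>)"
    using central P.subgroup_imp_group[OF \<pi>.subgroup_kernel]
    by (intro group.group_comm_groupI)
      (use central \<pi>.subgroup_kernel[THEN subgroup.subset] in \<open>auto simp: central_extension_def group_center_def\<close>)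
  then obtain f :: "'a \<Rightarrow> 'a \<Rightarrow> real"
    where "f \<in> hom (P\<lparr>carrier := kernel P H0 \<pi>\<rparr>) circle_group" "inj_on f (kernel P H0 \<pi>)"
    using comm_group.inj_hom_circle_group[of "P\<lparr>carrier := kernel P H0 \<pi>\<rparr>"]
      finite_subset[OF \<pi>.subgroup_kernel[THEN subgroup.subset] fin] by auto
  then interpret embedded_central_extension P H0 \<pi> f using central fin by unfold_locales
  obtain \<psi> where "\<psi> \<in> hom P Q" "\<forall>n\<in>N. \<psi> n = \<kappa> (f n)" using exists_hom_extending_\<kappa>_f by blast
  then interpret stem_construction P H0 \<pi> f \<psi> by unfold_locales auto
  show ?thesis
    using exists_nat_stem_extension[OF stem_extension_S finite_carrier_S] order_S by auto
qed

section \<open>Commuting lifts in Schur covers\<close>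

lemma card_derived_inter_kernel_le:
  assumes cover: "schur_cover E H0 pE"
    and central: "central_extension P H0 \<pi>" and fin: "finite (carrier P)"
  shows "card (derived P (carrier P) \<inter> kernel P H0 \<pi>) \<le> card (kernel E H0 pE)"
proof -
  have E: "group E" "group H0" "pE \<in> hom E H0" "pE ` carrier E = carrier H0" "finite (carrier E)"
    using cover by (auto simp: schur_cover_def stem_extension_def central_extension_def)
  obtain K :: "nat monoid" and \<rho> where K: "stem_extension K H0 \<rho>"
    "order K = order H0 * card (derived P (carrier P) \<inter> kernel P H0 \<pi>)"
    using exists_stem_extension_of_central_extension[OF central fin] by blast
  have "order K \<le> order E" using cover K(1) unfolding schur_cover_def by blast
  moreover have "order E = order H0 * card (kernel E H0 pE)"
    using order_eq_order_mult_card_kernel[OF E(1-4)] .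
  moreover have "order H0 > 0"
    using E(4,5) group.is_monoid[OF E(2)] finite_imageI[OF E(5), of pE]
    by (auto simp: order_def card_gt_0_iff intro: monoid.one_closed)
  ultimately show ?thesis using K(2) by simp
qed

lemma (in group) commutator_eq_one_iff:
  assumes ab: "a \<in> carrier G" "b \<in> carrier G"
  shows "a \<otimes> b \<otimes> inv a \<otimes> inv b = \<one> \<longleftrightarrow> a \<otimes> b = b \<otimes> a"
proof -
  have "a \<otimes> b \<otimes> inv a \<otimes> inv b = (a \<otimes> b) \<otimes> inv (b \<otimes> a)"
    using ab by (simp add: inv_mult_group m_assoc)
  then show ?thesis using ab by (simp add: inv_solve_right')
qed

definition fibre_product ::
  "('e, 'x) monoid_scheme \<Rightarrow> ('f, 'y) monoid_scheme \<Rightarrow> ('e \<Rightarrow> 'h) \<Rightarrow> ('f \<Rightarrow> 'h) \<Rightarrow> ('e \<times> 'f) monoid"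
  where "fibre_product E F pE pF =
    (E \<times>\<times> F)\<lparr>carrier := {(a, c). a \<in> carrier E \<and> c \<in> carrier F \<and> pE a = pF c}\<rparr>"

lemma carrier_fibre_product:
  "carrier (fibre_product E F pE pF) = {(a, c). a \<in> carrier E \<and> c \<in> carrier F \<and> pE a = pF c}"
  and mult_fibre_product:
  "(a, c) \<otimes>\<^bsub>fibre_product E F pE pF\<^esub> (a', c') = (a \<otimes>\<^bsub>E\<^esub> a', c \<otimes>\<^bsub>F\<^esub> c')"
  and one_fibre_product: "\<one>\<^bsub>fibre_product E F pE pF\<^esub> = (\<one>\<^bsub>E\<^esub>, \<one>\<^bsub>F\<^esub>)"
  by (simp_all add: fibre_product_def)

lemma
  assumes "group_hom E H0 pE" "group_hom F H0 pF"
  shows group_fibre_product: "group (fibre_product E F pE pF)"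
    and inv_fibre_product: "(a, c) \<in> carrier (fibre_product E F pE pF) \<Longrightarrow>
      inv\<^bsub>fibre_product E F pE pF\<^esub> (a, c) = (inv\<^bsub>E\<^esub> a, inv\<^bsub>F\<^esub> c)"
proof -
  interpret E: group_hom E H0 pE by fact
  interpret F: group_hom F H0 pF by fact
  have EF: "group (E \<times>\<times> F)" by (rule DirProd_group[OF E.G.group_axioms F.G.group_axioms])
  have sub: "subgroup (carrier (fibre_product E F pE pF)) (E \<times>\<times> F)"
  proof (rule group.subgroupI[OF EF])
    have "(\<one>\<^bsub>E\<^esub>, \<one>\<^bsub>F\<^esub>) \<in> carrier (fibre_product E F pE pF)" by (simp add: carrier_fibre_product)
    then show "carrier (fibre_product E F pE pF) \<noteq> {}" by blast
  next
    fix z assume "z \<in> carrier (fibre_product E F pE pF)"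
    then show "inv\<^bsub>E \<times>\<times> F\<^esub> z \<in> carrier (fibre_product E F pE pF)"
      by (auto simp: carrier_fibre_product inv_DirProd[OF E.G.group_axioms F.G.group_axioms])
  qed (auto simp: carrier_fibre_product)
  show "group (fibre_product E F pE pF)"
    using group.subgroup_imp_group[OF EF sub] by (simp add: fibre_product_def)
  show "(a, c) \<in> carrier (fibre_product E F pE pF) \<Longrightarrow>
      inv\<^bsub>fibre_product E F pE pF\<^esub> (a, c) = (inv\<^bsub>E\<^esub> a, inv\<^bsub>F\<^esub> c)"
    using group.m_inv_consistent[OF EF sub] inv_DirProd[OF E.G.group_axioms F.G.group_axioms]
    by (auto simp: fibre_product_def)
qed

lemma fst_image_fibre_product:
  assumes "pE ` carrier E \<subseteq> pF ` carrier F"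
  shows "fst ` carrier (fibre_product E F pE pF) = carrier E"
proof
  show "carrier E \<subseteq> fst ` carrier (fibre_product E F pE pF)"
  proof
    fix a assume a: "a \<in> carrier E"
    then obtain c where "c \<in> carrier F" "pF c = pE a" using assms by auto
    then show "a \<in> fst ` carrier (fibre_product E F pE pF)"
      using a by (intro image_eqI[of a fst "(a, c)"]) (simp_all add: carrier_fibre_product)
  qed
qed (auto simp: carrier_fibre_product)

lemma central_extension_fibre_product:
  assumes E: "central_extension E H0 pE" and F: "central_extension F H0 pF"
  shows "central_extension (fibre_product E F pE pF) H0 (\<lambda>z. pE (fst z))"
proof -
  interpret E: group_hom E H0 pE
    using E by (simp add: central_extension_def group_hom_def group_hom_axioms_def)
  interpret F: group_hom F H0 pF
    using F by (simp add: central_extension_def group_hom_def group_hom_axioms_def)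
  have surj: "pE ` carrier E = carrier H0" "pF ` carrier F = carrier H0"
    using E F by (simp_all add: central_extension_def)
  have "(\<lambda>z. pE (fst z)) \<in> hom (fibre_product E F pE pF) H0"
    by (rule homI) (auto simp: carrier_fibre_product fibre_product_def)
  moreover have "(\<lambda>z. pE (fst z)) ` carrier (fibre_product E F pE pF) = carrier H0"
    using fst_image_fibre_product[of pE E pF F] surj by (simp add: image_image[symmetric])
  moreover have "kernel (fibre_product E F pE pF) H0 (\<lambda>z. pE (fst z))
      \<subseteq> group_center (fibre_product E F pE pF)"
  proof
    fix z assume z: "z \<in> kernel (fibre_product E F pE pF) H0 (\<lambda>z. pE (fst z))"
    then obtain a c where ac: "z = (a, c)" "a \<in> kernel E H0 pE" "c \<in> kernel F H0 pF"
      by (auto simp: kernel_def carrier_fibre_product)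
    then have "a \<in> group_center E" "c \<in> group_center F"
      using E F by (auto simp: central_extension_def)
    then show "z \<in> group_center (fibre_product E F pE pF)"
      using z ac by (auto simp: group_center_def kernel_def carrier_fibre_product mult_fibre_product)
  qed
  ultimately show ?thesis
    unfolding central_extension_def
    using group_fibre_product[OF E.group_hom_axioms F.group_hom_axioms] E.H.group_axioms by blast
qed

text \<open>The projection maps \<open>L = P' \<inter> kernel\<close> onto the kernel of \<open>E\<close>, because that kernel lies in
  \<open>E'\<close>; as \<open>card L\<close> is at most the order of that kernel, the projection is injective on \<open>L\<close>.\<close>
lemma inj_on_fst_fibre_product:
  assumes cover: "schur_cover E H0 pE"
    and F: "central_extension F H0 pF" "finite (carrier F)"
    and P: "P = fibre_product E F pE pF"
  shows "inj_on fst (derived P (carrier P) \<inter> kernel P H0 (\<lambda>z. pE (fst z)))"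
proof -
  define L where "L = derived P (carrier P) \<inter> kernel P H0 (\<lambda>z. pE (fst z))"
  have E: "central_extension E H0 pE" "kernel E H0 pE \<subseteq> derived E (carrier E)" "finite (carrier E)"
    using cover by (auto simp: schur_cover_def stem_extension_def)
  interpret E: group_hom E H0 pE
    using E(1) by (simp add: central_extension_def group_hom_def group_hom_axioms_def)
  interpret F: group_hom F H0 pF
    using F(1) by (simp add: central_extension_def group_hom_def group_hom_axioms_def)
  interpret P: group P
    unfolding P by (rule group_fibre_product[OF E.group_hom_axioms F.group_hom_axioms])
  interpret fst: group_hom P E fst
    by (simp add: group_hom_def group_hom_axioms_def E.G.group_axioms)
      (rule homI, auto simp: P carrier_fibre_product fibre_product_def)
  have fin: "finite (carrier P)"
    using E(3) F(2) by (auto simp: P carrier_fibre_product intro: finite_subset[of _ "carrier E \<times> carrier F"])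
  have L_carrier: "L \<subseteq> carrier P" using P.derived_in_carrier[of "carrier P"] by (auto simp: L_def)
  have card_L: "card L \<le> card (kernel E H0 pE)"
    unfolding L_def P by (rule card_derived_inter_kernel_le[OF cover central_extension_fibre_product[OF E(1) F(1)]])
      (use fin P in simp)
  have "fst ` carrier P = carrier E"
    using E(1) F(1) by (simp add: P fst_image_fibre_product central_extension_def)
  then have derived: "derived E (carrier E) = fst ` derived P (carrier P)"
    using fst.derived_img[of "carrier P"] by simp
  have "a \<in> fst ` L" if a: "a \<in> kernel E H0 pE" for a
  proof -
    obtain x where x: "x \<in> derived P (carrier P)" "a = fst x" using a E(2) derived by auto
    then have "x \<in> kernel P H0 (\<lambda>z. pE (fst z))"
      using a P.derived_in_carrier[of "carrier P"] by (auto simp: kernel_def)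
    then show ?thesis using x by (auto simp: L_def)
  qed
  moreover have "fst ` L \<subseteq> kernel E H0 pE"
    using L_carrier by (auto simp: L_def kernel_def P carrier_fibre_product)
  ultimately have img: "fst ` L = kernel E H0 pE" by blast
  have "card (kernel E H0 pE) \<le> card L"
    using card_image_le[OF finite_subset[OF L_carrier fin], of fst] img by simp
  with card_L img have "card (fst ` L) = card L" by simp
  then show ?thesis using eq_card_imp_inj_on finite_subset[OF L_carrier fin] by (auto simp: L_def)
qed

lemma schur_cover_commute_transfer:
  assumes cover: "schur_cover E H0 pE"
    and F: "central_extension F H0 pF" "finite (carrier F)"
    and e: "e1 \<in> carrier E" "e2 \<in> carrier E" and f: "f1 \<in> carrier F" "f2 \<in> carrier F"
    and lifts: "pE e1 = pF f1" "pE e2 = pF f2"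
    and commute: "e1 \<otimes>\<^bsub>E\<^esub> e2 = e2 \<otimes>\<^bsub>E\<^esub> e1"
  shows "f1 \<otimes>\<^bsub>F\<^esub> f2 = f2 \<otimes>\<^bsub>F\<^esub> f1"
proof -
  interpret E: group_hom E H0 pE
    using cover by (simp add: schur_cover_def stem_extension_def central_extension_def
        group_hom_def group_hom_axioms_def)
  interpret F: group_hom F H0 pF
    using F(1) by (simp add: central_extension_def group_hom_def group_hom_axioms_def)
  define P where "P = fibre_product E F pE pF"
  define L where "L = derived P (carrier P) \<inter> kernel P H0 (\<lambda>z. pE (fst z))"
  interpret P: group P
    unfolding P_def by (rule group_fibre_product[OF E.group_hom_axioms F.group_hom_axioms])
  let ?c = "(e1, f1) \<otimes>\<^bsub>P\<^esub> (e2, f2) \<otimes>\<^bsub>P\<^esub> inv\<^bsub>P\<^esub> (e1, f1) \<otimes>\<^bsub>P\<^esub> inv\<^bsub>P\<^esub> (e2, f2)"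
  have ef: "(e1, f1) \<in> carrier P" "(e2, f2) \<in> carrier P"
    using e f lifts by (auto simp: P_def carrier_fibre_product)
  have "e1 \<otimes>\<^bsub>E\<^esub> e2 \<otimes>\<^bsub>E\<^esub> inv\<^bsub>E\<^esub> e1 \<otimes>\<^bsub>E\<^esub> inv\<^bsub>E\<^esub> e2 = \<one>\<^bsub>E\<^esub>"
    using E.G.commutator_eq_one_iff[OF e] commute by blast
  then have c: "?c = (\<one>\<^bsub>E\<^esub>, f1 \<otimes>\<^bsub>F\<^esub> f2 \<otimes>\<^bsub>F\<^esub> inv\<^bsub>F\<^esub> f1 \<otimes>\<^bsub>F\<^esub> inv\<^bsub>F\<^esub> f2)"
    using ef
    by (simp add: P_def inv_fibre_product[OF E.group_hom_axioms F.group_hom_axioms] mult_fibre_product)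
  have "?c \<in> derived P (carrier P)" by (rule P.commutator_in_derived[OF ef])
  moreover have "?c \<in> carrier P" using ef by simp
  then have "?c \<in> kernel P H0 (\<lambda>z. pE (fst z))"
    using c by (simp add: kernel_def)
  ultimately have cL: "?c \<in> L" by (simp add: L_def)
  have oneL: "\<one>\<^bsub>P\<^esub> \<in> L"
    using subgroup.one_closed[OF P.derived_is_subgroup[of "carrier P"]] P.one_closed
    by (auto simp: L_def kernel_def P_def one_fibre_product)
  have "fst ?c = fst \<one>\<^bsub>P\<^esub>" using c by (simp add: P_def one_fibre_product)
  then have "?c = \<one>\<^bsub>P\<^esub>"
    using inj_onD[OF inj_on_fst_fibre_product[OF cover F P_def] _ cL[unfolded L_def] oneL[unfolded L_def]]
    by blast
  then have "f1 \<otimes>\<^bsub>F\<^esub> f2 \<otimes>\<^bsub>F\<^esub> inv\<^bsub>F\<^esub> f1 \<otimes>\<^bsub>F\<^esub> inv\<^bsub>F\<^esub> f2 = \<one>\<^bsub>F\<^esub>"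
    using c by (simp add: P_def one_fibre_product)
  then show ?thesis using F.G.commutator_eq_one_iff[OF f] by blast
qed

section \<open>The deep commuting graph of a subgroup\<close>

lemma schur_cover_lifts_commute_transfer:
  assumes cover: "schur_cover E H0 pE" and F: "central_extension F H0 pF" "finite (carrier F)"
    and xy: "x \<in> carrier H0" "y \<in> carrier H0"
    and commute: "\<forall>a\<in>carrier E. \<forall>b\<in>carrier E. pE a = x \<longrightarrow> pE b = y \<longrightarrow> a \<otimes>\<^bsub>E\<^esub> b = b \<otimes>\<^bsub>E\<^esub> a"
  shows "\<forall>a\<in>carrier F. \<forall>b\<in>carrier F. pF a = x \<longrightarrow> pF b = y \<longrightarrow> a \<otimes>\<^bsub>F\<^esub> b = b \<otimes>\<^bsub>F\<^esub> a"
proof (intro ballI impI)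
  fix a b assume ab: "a \<in> carrier F" "b \<in> carrier F" "pF a = x" "pF b = y"
  have "pE ` carrier E = carrier H0"
    using cover by (simp add: schur_cover_def stem_extension_def central_extension_def)
  then obtain a' b' where "a' \<in> carrier E" "b' \<in> carrier E" "pE a' = x" "pE b' = y"
    using xy by (metis imageE)
  then show "a \<otimes>\<^bsub>F\<^esub> b = b \<otimes>\<^bsub>F\<^esub> a"
    using schur_cover_commute_transfer[OF cover F] ab commute by metis
qed

lemma deep_commuting_graph_schur_cover_eq:
  assumes E: "schur_cover E H0 pE" and F: "schur_cover F H0 pF"
  shows "deep_commuting_graph E pE H0 = deep_commuting_graph F pF H0"
proof -
  have E': "central_extension E H0 pE" "finite (carrier E)"
    and F': "central_extension F H0 pF" "finite (carrier F)"
    using E F by (simp_all add: schur_cover_def stem_extension_def)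
  have iff: "(\<forall>a\<in>carrier E. \<forall>b\<in>carrier E. pE a = x \<longrightarrow> pE b = y \<longrightarrow> a \<otimes>\<^bsub>E\<^esub> b = b \<otimes>\<^bsub>E\<^esub> a)
      \<longleftrightarrow> (\<forall>a\<in>carrier F. \<forall>b\<in>carrier F. pF a = x \<longrightarrow> pF b = y \<longrightarrow> a \<otimes>\<^bsub>F\<^esub> b = b \<otimes>\<^bsub>F\<^esub> a)"
    if "x \<in> carrier H0" "y \<in> carrier H0" for x y
    using schur_cover_lifts_commute_transfer[OF E F' that]
      schur_cover_lifts_commute_transfer[OF F E' that] by blast
  have edges: "(x \<in> carrier H0 \<and> y \<in> carrier H0 \<and> x \<noteq> y \<and>
      (\<forall>a\<in>carrier E. \<forall>b\<in>carrier E. pE a = x \<longrightarrow> pE b = y \<longrightarrow> a \<otimes>\<^bsub>E\<^esub> b = b \<otimes>\<^bsub>E\<^esub> a))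
    \<longleftrightarrow> (x \<in> carrier H0 \<and> y \<in> carrier H0 \<and> x \<noteq> y \<and>
      (\<forall>a\<in>carrier F. \<forall>b\<in>carrier F. pF a = x \<longrightarrow> pF b = y \<longrightarrow> a \<otimes>\<^bsub>F\<^esub> b = b \<otimes>\<^bsub>F\<^esub> a))"
    for x y
    using iff[of x y] by (cases "x \<in> carrier H0"; cases "y \<in> carrier H0") simp_all
  show ?thesis unfolding deep_commuting_graph_def by (simp only: edges)
qed

lemma (in group_hom) subgroup_vimage:
  assumes K: "subgroup K H"
  shows "subgroup (h -` K \<inter> carrier G) G"
proof (rule G.subgroupI)
  have "\<one> \<in> h -` K \<inter> carrier G" using subgroup.one_closed[OF K] by simp
  then show "h -` K \<inter> carrier G \<noteq> {}" by blast
qed (auto simp: subgroup.m_inv_closed[OF K] subgroup.m_closed[OF K])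

lemma induced_subgraph_deep_commuting_graph:
  assumes "H \<subseteq> carrier G"
  shows "induced_subgraph (deep_commuting_graph Gt proj G) H
    = deep_commuting_graph (Gt\<lparr>carrier := proj -` H \<inter> carrier Gt\<rparr>) proj (G\<lparr>carrier := H\<rparr>)"
  using assms by (auto simp: induced_subgraph_def deep_commuting_graph_def)

lemma
  assumes central: "central_extension Gt G proj" and H: "subgroup H G"
  shows central_extension_preimage:
      "central_extension (Gt\<lparr>carrier := proj -` H \<inter> carrier Gt\<rparr>) (G\<lparr>carrier := H\<rparr>) proj"
    and kernel_preimage:
      "kernel (Gt\<lparr>carrier := proj -` H \<inter> carrier Gt\<rparr>) (G\<lparr>carrier := H\<rparr>) proj = kernel Gt G proj"
proof -
  interpret proj: group_hom Gt G proj
    using central by (simp add: central_extension_def group_hom_def group_hom_axioms_def)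
  have sub: "subgroup (proj -` H \<inter> carrier Gt) Gt"
    using proj.subgroup_vimage[OF H] by simp
  show kernel: "kernel (Gt\<lparr>carrier := proj -` H \<inter> carrier Gt\<rparr>) (G\<lparr>carrier := H\<rparr>) proj = kernel Gt G proj"
    using subgroup.one_closed[OF H] by (auto simp: kernel_def)
  have surj: "proj ` carrier Gt = carrier G" using central by (simp add: central_extension_def)
  have "proj ` (proj -` H \<inter> carrier Gt) = H"
  proof
    show "H \<subseteq> proj ` (proj -` H \<inter> carrier Gt)"
    proof
      fix x assume x: "x \<in> H"
      then have "x \<in> proj ` carrier Gt" using surj subgroup.subset[OF H] by auto
      then obtain a where "a \<in> carrier Gt" "proj a = x" by auto
      then show "x \<in> proj ` (proj -` H \<inter> carrier Gt)" using x by blast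
    qed
  qed blast
  moreover have "proj \<in> hom (Gt\<lparr>carrier := proj -` H \<inter> carrier Gt\<rparr>) (G\<lparr>carrier := H\<rparr>)"
    by (rule homI) auto
  moreover have "kernel Gt G proj \<subseteq> group_center (Gt\<lparr>carrier := proj -` H \<inter> carrier Gt\<rparr>)"
    using central subgroup.one_closed[OF H]
    by (auto simp: central_extension_def group_center_def kernel_def)
  ultimately show "central_extension (Gt\<lparr>carrier := proj -` H \<inter> carrier Gt\<rparr>) (G\<lparr>carrier := H\<rparr>) proj"
    unfolding central_extension_def kernel
    using proj.G.subgroup_imp_group[OF sub] proj.H.subgroup_imp_group[OF H] by simp
qed

lemma schur_cover_preimage:
  assumes cover: "schur_cover Gt G proj" and H: "subgroup H G"
    and cover_H: "schur_cover K (G\<lparr>carrier := H\<rparr>) rho"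
    and card: "card (kernel K (G\<lparr>carrier := H\<rparr>) rho) = card (kernel Gt G proj)"
    and derived: "kernel Gt G proj \<subseteq> derived Gt (proj -` H \<inter> carrier Gt)"
  shows "schur_cover (Gt\<lparr>carrier := proj -` H \<inter> carrier Gt\<rparr>) (G\<lparr>carrier := H\<rparr>) proj"
proof -
  let ?Ht = "Gt\<lparr>carrier := proj -` H \<inter> carrier Gt\<rparr>" and ?H = "G\<lparr>carrier := H\<rparr>"
  have central: "central_extension Gt G proj" and fin: "finite (carrier Gt)"
    using cover by (simp_all add: schur_cover_def stem_extension_def)
  have central_Ht: "central_extension ?Ht ?H proj"
    by (rule central_extension_preimage[OF central H])
  have Gt: "group Gt" using central by (simp add: central_extension_def)
  interpret proj: group_hom Gt G proj
    using central by (simp add: central_extension_def group_hom_def group_hom_axioms_def)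
  have "derived ?Ht (carrier ?Ht) = derived Gt (proj -` H \<inter> carrier Gt)"
    using group.derived_consistent[OF Gt _ proj.subgroup_vimage[OF H]] by simp
  then have stem: "stem_extension ?Ht ?H proj"
    using central_Ht derived
    by (simp add: stem_extension_def central_extension_def kernel_preimage[OF central H])
  have "order ?Ht = order ?H * card (kernel ?Ht ?H proj)"
    using central_Ht order_eq_order_mult_card_kernel unfolding central_extension_def by blast
  also have "\<dots> = order K"
    using cover_H order_eq_order_mult_card_kernel card kernel_preimage[OF central H]
    unfolding schur_cover_def stem_extension_def central_extension_def by metis
  finally show ?thesis
    using stem fin cover_H by (simp add: schur_cover_def)
qed

theorem proposition3p2:
  fixes G :: "('a, 'm) monoid_scheme"
    and Gt :: "('b, 'n) monoid_scheme" and proj :: "'b \<Rightarrow> 'a"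
    and H :: "'a set"
    and K :: "('c, 'k) monoid_scheme" and rho :: "'c \<Rightarrow> 'a"
  assumes "group G" and "finite (carrier G)"
    and "schur_cover Gt G proj"
    and "subgroup H G" and "H \<noteq> carrier G"
    and "schur_cover K (G\<lparr>carrier := H\<rparr>) rho"
    and "(K\<lparr>carrier := kernel K (G\<lparr>carrier := H\<rparr>) rho\<rparr>) \<cong> (Gt\<lparr>carrier := kernel Gt G proj\<rparr>)"
    and "kernel Gt G proj \<subseteq> derived Gt (proj -` H \<inter> carrier Gt)"
  shows "induced_subgraph (deep_commuting_graph Gt proj G) H
           = deep_commuting_graph K rho (G\<lparr>carrier := H\<rparr>)"
proof -
  \<comment> \<open>\<open>G\<close> need not be finite, nor \<open>H\<close> proper.\<close>
  have "card (kernel K (G\<lparr>carrier := H\<rparr>) rho) = card (kernel Gt G proj)"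
    using iso_same_card[OF assms(7)] by simp
  then have "schur_cover (Gt\<lparr>carrier := proj -` H \<inter> carrier Gt\<rparr>) (G\<lparr>carrier := H\<rparr>) proj"
    using schur_cover_preimage assms(3,4,6,8) by blast
  then have "deep_commuting_graph (Gt\<lparr>carrier := proj -` H \<inter> carrier Gt\<rparr>) proj (G\<lparr>carrier := H\<rparr>)
      = deep_commuting_graph K rho (G\<lparr>carrier := H\<rparr>)"
    using deep_commuting_graph_schur_cover_eq assms(6) by blast
  with induced_subgraph_deep_commuting_graph[OF subgroup.subset[OF assms(4)]] show ?thesis
    by (rule trans)
qed
end
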